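(* Let $\mathbf{M}$ be a strongly regular sequence, $S=S(d,\alpha)$ a sector, $f\in\mathcal{A}^{(\mathbf{M})}(S)$, $0<\delta<\gamma(\mathbf{M})$, and $\tau\in\mathbb{R}$ with $|\tau-d|<\alpha\pi/2$. Then the $\mathbf{M}$-Laplace transform $$(\mathcal{L}^\tau_{\mathbf{M}}f)(z)=\int_0^{\infty(\tau)}e_{\mathbf{M}}\Big(\frac{u}{z}\Big)f(u)\frac{du}{u}$$ (integral along the ray $t\mapsto te^{i\tau}$, $t\in(0,\infty)$) is well defined and holomorphic for $z\in\mathcal{R}$ with $|\arg z-\tau|<\delta\pi/2$ and $|z|$ small enough. Moreover, the family $\{\mathcal{L}^\tau_{\mathbf{M}}f\}_{|\tau-d|<\alpha\pi/2}$ defines a holomorphic function $\mathcal{L}_{\mathbf{M}}f$ in a sectorial region $G(d,\alpha+\delta)$.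
   Context: A sequence $\mathbf{M}=(M_p)_{p\ge0}$ of positive reals with $M_0=1$ is strongly regular if: ($\alpha_0$) $M_p^2\le M_{p-1}M_{p+1}$ for $p\ge1$; ($\mu$) there is $A>0$ with $M_{p+\ell}\le A^{p+\ell}M_pM_\ell$; ($\gamma_1$) there is $B>0$ with $\sum_{\ell\ge p}\frac{M_\ell}{(\ell+1)M_{\ell+1}}\le B\frac{M_p}{M_{p+1}}$. Put $m_p=M_{p+1}/M_p$, $h_{\mathbf{M}}(t)=\inf_pM_pt^p$ ($t>0$), $h_{\mathbf{M}}(0)=0$. $\mathbf{M}$ satisfies $(P_\gamma)$ if there are reals $(m'_p)$, $a\ge1$ with $a^{-1}m_p\le m'_p\le am_p$ and $((p+1)^{-\gamma}m'_p)_p$ increasing; $\gamma(\mathbf{M})=\sup\{\gamma:(P_\gamma)\}\in(0,\infty)$. $\mathcal{R}$ is the Riemann surface of the logarithm, $S(d,\alpha)=\{z\in\mathcal{R}:|\arg z-d|<\alpha\pi/2\}$, $S_\gamma=S(0,\gamma)$. A sectorial region $G(d,\alpha)$ is a domain $G\subset S(d,\alpha)$ such that for every $\beta\in(0,\alpha)$ there is $\rho>0$ with $\{z:|\arg z-d|<\beta\pi/2,|z|<\rho\}\subset G$. A sector $T=S(d',\theta')$ is an unbounded proper subsector of $S(d,\alpha)$ if $[d'-\theta'\pi/2,d'+\theta'\pi/2]\subset(d-\alpha\pi/2,d+\alpha\pi/2)$. A holomorphic $f$ on $S$ is continuous at the origin if $\lim_{z\to0,z\in T}f(z)$ exists for every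 bounded proper subsector $T$ of $S$. $\mathcal{A}^{(\mathbf{M})}(S)$ is the set of holomorphic $f$ on $S$, continuous at 0, such that for every unbounded proper subsector $T$ of $S$ there are $r,k_4,k_5>0$ with $|f(z)|\le k_4/h_{\mathbf{M}}(k_5/|z|)$ for $z\in T$, $|z|\ge r$. Kernel: fix $\delta_1,s$ with $\delta<\delta_1<\gamma(\mathbf{M})$, $s\delta_1<1<s\gamma(\mathbf{M})$, $\mathbf{M}^s=(M_p^s)$, $G_{\mathbf{M}}(z)=\exp\big(\frac{1}{\pi}\int_{-\infty}^{\infty}\log(h_{\mathbf{M}^s}(|t|))\frac{itz^s-1}{it-z^s}\frac{dt}{1+t^2}\big)$ for $z\in S_{\delta_1}$, and $e_{\mathbf{M}}(z)=zG_{\mathbf{M}}(1/z)$ for $z\in S_\delta$. *)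

theory Defs
  imports "HOL-Analysis.Analysis"
begin

text \<open>Points of the Riemann surface of the logarithm are represented by their
  logarithmic coordinate w :: complex, i.e. z = exp w with |z| = exp (Re w) and
  arg z = Im w.  A function on (a subset of) the Riemann surface is a function
  of the logarithmic coordinate; holomorphy is holomorphy in w.\<close>

definition strongly_regular :: "(nat \<Rightarrow> real) \<Rightarrow> bool" where
  "strongly_regular M \<longleftrightarrow>
     M 0 = 1 \<and> (\<forall>p. M p > 0) \<and>
     (\<forall>p\<ge>1. (M p)\<^sup>2 \<le> M (p - 1) * M (p + 1)) \<and>
     (\<exists>A>0. \<forall>p l. M (p + l) \<le> A ^ (p + l) * M p * M l) \<and>
     (\<exists>B>0. \<forall>p. summable (\<lambda>l. M (l + p) / ((real (l + p) + 1) * M (l + p + 1))) \<and>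
        (\<Sum>l. M (l + p) / ((real (l + p) + 1) * M (l + p + 1))) \<le> B * M p / M (p + 1))"

definition quot_seq :: "(nat \<Rightarrow> real) \<Rightarrow> nat \<Rightarrow> real" where
  "quot_seq M p = M (p + 1) / M p"

definition P_gamma :: "real \<Rightarrow> (nat \<Rightarrow> real) \<Rightarrow> bool" where
  "P_gamma g M \<longleftrightarrow> (\<exists>m' :: nat \<Rightarrow> real. \<exists>a::real. a \<ge> 1 \<and>
     (\<forall>p. quot_seq M p / a \<le> m' p \<and> m' p \<le> a * quot_seq M p) \<and>
     mono (\<lambda>p. m' p / (real p + 1) powr g))"

definition gammaM :: "(nat \<Rightarrow> real) \<Rightarrow> real" where
  "gammaM M = Sup {g. P_gamma g M}"

definition hM :: "(nat \<Rightarrow> real) \<Rightarrow> real \<Rightarrow> real" where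
  "hM M t = (if t > 0 then (INF p. M p * t ^ p) else 0)"

definition sector :: "real \<Rightarrow> real \<Rightarrow> complex set" where
  "sector d \<alpha> = {w. \<bar>Im w - d\<bar> < \<alpha> * pi / 2}"

definition bsector :: "real \<Rightarrow> real \<Rightarrow> real \<Rightarrow> complex set" where
  "bsector d \<beta> \<rho> = {w. \<bar>Im w - d\<bar> < \<beta> * pi / 2 \<and> exp (Re w) < \<rho>}"

definition proper_subsector :: "real \<Rightarrow> real \<Rightarrow> real \<Rightarrow> real \<Rightarrow> bool" where
  "proper_subsector d' \<theta>' d \<alpha> \<longleftrightarrow> \<theta>' > 0 \<and>
     d - \<alpha> * pi / 2 < d' - \<theta>' * pi / 2 \<and> d' + \<theta>' * pi / 2 < d + \<alpha> * pi / 2"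

definition sectorial_region :: "complex set \<Rightarrow> real \<Rightarrow> real \<Rightarrow> bool" where
  "sectorial_region G d \<alpha> \<longleftrightarrow> open G \<and> connected G \<and> G \<noteq> {} \<and> G \<subseteq> sector d \<alpha> \<and>
     (\<forall>\<beta>. 0 < \<beta> \<and> \<beta> < \<alpha> \<longrightarrow> (\<exists>\<rho>>0. bsector d \<beta> \<rho> \<subseteq> G))"

definition cont_at_origin :: "(complex \<Rightarrow> complex) \<Rightarrow> real \<Rightarrow> real \<Rightarrow> bool" where
  "cont_at_origin f d \<alpha> \<longleftrightarrow>
     (\<forall>d' \<theta>' \<rho>. proper_subsector d' \<theta>' d \<alpha> \<and> \<rho> > 0 \<longrightarrow>
        (\<exists>L. \<forall>\<epsilon>>0. \<exists>\<eta>>0. \<forall>w\<in>bsector d' \<theta>' \<rho>. exp (Re w) < \<eta> \<longrightarrow> cmod (f w - L) < \<epsilon>))"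

definition AM :: "(nat \<Rightarrow> real) \<Rightarrow> real \<Rightarrow> real \<Rightarrow> (complex \<Rightarrow> complex) set" where
  "AM M d \<alpha> = {f. f holomorphic_on sector d \<alpha> \<and> cont_at_origin f d \<alpha> \<and>
     (\<forall>d' \<theta>'. proper_subsector d' \<theta>' d \<alpha> \<longrightarrow>
        (\<exists>r k4 k5. r > 0 \<and> k4 > 0 \<and> k5 > 0 \<and>
          (\<forall>w\<in>sector d' \<theta>'. exp (Re w) \<ge> r \<longrightarrow> cmod (f w) \<le> k4 / hM M (k5 / exp (Re w)))))}"

text \<open>The function G_M, in logarithmic coordinates (z^s = exp (s w)).\<close>
definition GM :: "(nat \<Rightarrow> real) \<Rightarrow> real \<Rightarrow> complex \<Rightarrow> complex" where
  "GM M s w = exp (complex_of_real (1 / pi) *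
     (LINT t|lborel. complex_of_real (ln (hM (\<lambda>p. M p powr s) \<bar>t\<bar>)) *
        ((\<i> * t * exp (s * w) - 1) / (\<i> * t - exp (s * w))) / complex_of_real (1 + t\<^sup>2)))"

text \<open>The kernel e_M(z) = z G_M(1/z), in logarithmic coordinates.\<close>
definition eM :: "(nat \<Rightarrow> real) \<Rightarrow> real \<Rightarrow> complex \<Rightarrow> complex" where
  "eM M s w = exp w * GM M s (- w)"

text \<open>Integrand of the M-Laplace transform along the ray u = t e^{i tau}
  (du/u = dt/t); log coordinate of u is ln t + i tau, that of u/z is ln t + i tau - w.\<close>
definition lap_integrand :: "(nat \<Rightarrow> real) \<Rightarrow> real \<Rightarrow> (complex \<Rightarrow> complex) \<Rightarrow> real \<Rightarrow> complex \<Rightarrow> real \<Rightarrow> complex" where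
  "lap_integrand M s f \<tau> w t =
     eM M s (complex_of_real (ln t) + \<i> * complex_of_real \<tau> - w) *
     f (complex_of_real (ln t) + \<i> * complex_of_real \<tau>) / complex_of_real t"

definition LapM :: "(nat \<Rightarrow> real) \<Rightarrow> real \<Rightarrow> (complex \<Rightarrow> complex) \<Rightarrow> real \<Rightarrow> complex \<Rightarrow> complex" where
  "LapM M s f \<tau> w = (LINT t:{0<..}|lborel. lap_integrand M s f \<tau> w t)"

end

theory Submission
  imports Defs "HOL-Complex_Analysis.Complex_Analysis" "HOL-Probability.Sinc_Integral"
begin

text \<open>The real part of \<open>ln G\<^sub>M\<close> is a Poisson integral of \<open>ln h\<close> for the sequence \<open>M\<^sup>s\<close>, so the kernel
  \<open>e\<^sub>M(u/z)\<close> is bounded by \<open>\<bar>u/z\<bar>\<close> and decays like a power of \<open>h\<^sub>M(c \<bar>z/u\<bar>)\<close> as \<open>u \<rightarrow> \<infinity>\<close>.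
  By \<open>(\<mu>)\<close> this power beats the growth \<open>1 / h\<^sub>M(k/\<bar>u\<bar>)\<close> of \<open>f\<close>, so along a ray the integrand
  has a majorant \<open>K / (1 + t\<^sup>2)\<close>, locally uniformly in \<open>z\<close> and in the direction, and the
  transform is holomorphic. Rescaling the ray does not change the integral, so as a function of the
  complex direction parameter it has derivative zero: nearby directions give the same function.
  Choosing the radii to decrease away from \<open>d\<close>, the transforms glue to a holomorphic function on
  a sectorial region of opening \<open>\<alpha> + \<delta>\<close>.\<close>

section \<open>Holomorphy of parameter integrals\<close>

lemma holomorphic_second_order_bound:
  fixes g :: "complex \<Rightarrow> complex"
  assumes hol: "g holomorphic_on U" and U: "open U" and r: "r > 0" and sub: "cball w0 r \<subseteq> U"
    and bound: "\<And>w. w \<in> cball w0 r \<Longrightarrow> norm (g w) \<le> B" and h: "norm h \<le> r / 2"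
  shows "norm (g (w0 + h) - g w0 - h * deriv g w0) \<le> 8 * B / r\<^sup>2 * norm h ^ 2"
proof -
  have B: "B \<ge> 0" using bound[of w0] r by (smt (verit) centre_in_cball norm_ge_zero)
  have dg: "(g has_field_derivative deriv g w) (at w)" if "w \<in> U" for w
    using hol U that by (simp add: holomorphic_derivI)
  have ddg: "(deriv g has_field_derivative deriv (deriv g) w) (at w)" if "w \<in> U" for w
    using holomorphic_deriv[OF hol U] U that by (simp add: holomorphic_derivI)
  have dd_bound: "norm (deriv (deriv g) u) \<le> 8 * B / r\<^sup>2" if u: "u \<in> cball w0 (r / 2)" for u
  proof -
    have cs: "cball u (r / 2) \<subseteq> cball w0 r"
      using u by (subst cball_subset_cball_iff) (auto simp: dist_commute)
    have "norm ((deriv ^^ 2) g u) \<le> fact 2 * B / (r / 2) ^ 2"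
    proof (rule Cauchy_inequality)
      show "g holomorphic_on ball u (r / 2)"
        by (rule holomorphic_on_subset[OF hol]) (meson ball_subset_cball cs sub order_trans)
      show "continuous_on (cball u (r / 2)) g"
        using cs sub by (intro holomorphic_on_imp_continuous_on holomorphic_on_subset[OF hol]) auto
      show "norm (g x) \<le> B" if "norm (u - x) = r / 2" for x
        using subsetD[OF cs, of x] that by (intro bound) (simp add: dist_norm)
    qed (use r in simp)
    then show ?thesis by (simp add: numeral_2_eq_2 power2_eq_square field_simps)
  qed
  have d_bound: "norm (deriv g u - deriv g w0) \<le> 8 * B / r\<^sup>2 * norm h" if u: "u \<in> cball w0 (norm h)" for u
  proof -
    have "norm (deriv g u - deriv g w0) \<le> 8 * B / r\<^sup>2 * norm (u - w0)"
      using h u r sub dd_bound subset_cball[of "r / 2" r w0]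
      by (intro field_differentiable_bound[of "cball w0 (r / 2)" _ "deriv (deriv g)"])
         (auto intro!: has_field_derivative_at_within ddg)
    also have "\<dots> \<le> 8 * B / r\<^sup>2 * norm h"
      using u B by (intro mult_left_mono) (auto simp: dist_norm norm_minus_commute)
    finally show ?thesis .
  qed
  \<comment> \<open>mean value inequality for \<open>g u - u * deriv g w0\<close>, whose derivative is \<open>deriv g u - deriv g w0\<close>\<close>
  have "norm ((g (w0 + h) - (w0 + h) * deriv g w0) - (g w0 - w0 * deriv g w0))
        \<le> 8 * B / r\<^sup>2 * norm h * norm ((w0 + h) - w0)"
  proof (rule field_differentiable_bound[of "cball w0 (norm h)" "\<lambda>u. g u - u * deriv g w0"
        "\<lambda>u. deriv g u - deriv g w0" _ "w0 + h" w0])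
    show "((\<lambda>u. g u - u * deriv g w0) has_field_derivative deriv g u - deriv g w0) (at u within cball w0 (norm h))"
      if "u \<in> cball w0 (norm h)" for u
    proof -
      have "u \<in> U" using that h r sub subset_cball[of "norm h" r w0] by auto
      from DERIV_diff[OF dg[OF this] DERIV_cmult_right[OF DERIV_ident, of "deriv g w0"]]
      show ?thesis by (simp add: has_field_derivative_at_within)
    qed
  qed (use d_bound in \<open>auto simp: dist_norm\<close>)
  then show ?thesis by (simp add: algebra_simps power2_eq_square)
qed

lemma borel_measurable_deriv_param:
  fixes k :: "complex \<Rightarrow> 'a \<Rightarrow> complex"
  assumes U: "open U" "w0 \<in> U" and meas: "\<And>w. w \<in> U \<Longrightarrow> k w \<in> borel_measurable M"
    and diff: "\<And>t. (\<lambda>w. k w t) field_differentiable (at w0)"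
  shows "(\<lambda>t. deriv (\<lambda>w. k w t) w0) \<in> borel_measurable M"
proof -
  obtain r where r: "r > 0" "ball w0 r \<subseteq> U" using U openE by blast
  define h where "h n = complex_of_real (r / Suc (Suc n))" for n
  have "norm (h n) < r" for n
    unfolding h_def norm_of_real using r by (simp add: field_simps add_pos_nonneg)
  then have h_in: "w0 + h n \<in> U" for n
    using r by (intro subsetD[OF r(2)]) (simp add: dist_norm)
  have "(\<lambda>n. r / real (Suc (Suc n))) \<longlonglongrightarrow> 0"
    using LIMSEQ_ignore_initial_segment[OF lim_const_over_n[of r], of 2] by (simp add: numeral_2_eq_2)
  then have "h \<longlonglongrightarrow> 0"
    unfolding h_def using tendsto_of_real_iff[where 'a=complex] by (metis of_real_0)
  moreover have "h n \<noteq> 0" for n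
    using r by (simp add: h_def del: of_real_divide of_nat_Suc)
  ultimately have h_lim: "filterlim h (at 0) sequentially"
    by (simp add: filterlim_atI)
  show ?thesis
  proof (rule borel_measurable_LIMSEQ_metric[where f="\<lambda>n t. (k (w0 + h n) t - k w0 t) / h n"])
    show "(\<lambda>t. (k (w0 + h n) t - k w0 t) / h n) \<in> borel_measurable M" for n
      using meas h_in U(2) by measurable
    fix t
    have "((\<lambda>h. (k (w0 + h) t - k w0 t) / h) \<longlongrightarrow> deriv (\<lambda>w. k w t) w0) (at 0)"
      using diff[of t] by (simp add: DERIV_deriv_iff_field_differentiable[symmetric] DERIV_def)
    from filterlim_compose[OF this h_lim]
    show "(\<lambda>n. (k (w0 + h n) t - k w0 t) / h n) \<longlonglongrightarrow> deriv (\<lambda>w. k w t) w0"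
      by (simp add: o_def)
  qed
qed


lemma holomorphic_on_lborel_integral:
  fixes k :: "complex \<Rightarrow> real \<Rightarrow> complex"
  assumes U: "open U"
    and meas: "\<And>w. w \<in> U \<Longrightarrow> k w \<in> borel_measurable lborel"
    and hol: "\<And>t. (\<lambda>w. k w t) holomorphic_on U"
    and dom: "\<And>w0. w0 \<in> U \<Longrightarrow> \<exists>r>0. \<exists>g. cball w0 r \<subseteq> U \<and> integrable lborel g \<and>
                  (\<forall>w\<in>cball w0 r. \<forall>t. norm (k w t) \<le> g t)"
  shows "(\<lambda>w. \<integral>t. k w t \<partial>lborel) holomorphic_on U"
  unfolding holomorphic_on_open[OF U]
proof
  fix w0 assume w0: "w0 \<in> U"
  obtain r g where r: "r > 0" and sub: "cball w0 r \<subseteq> U" and g: "integrable lborel g"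
    and bound: "\<And>w t. w \<in> cball w0 r \<Longrightarrow> norm (k w t) \<le> g t"
    using dom[OF w0] by blast
  define D where "D t = deriv (\<lambda>w. k w t) w0" for t
  define F where "F w = (\<integral>t. k w t \<partial>lborel)" for w
  have g0: "g t \<ge> 0" for t
    using bound[of w0 t] r by (smt (verit) centre_in_cball norm_ge_zero)
  have k_int: "integrable lborel (k w)" if "w \<in> cball w0 r" for w
    using that sub bound g0
    by (intro Bochner_Integration.integrable_bound[OF g meas]) (auto intro!: AE_I2 simp: abs_of_nonneg)
  have "norm ((deriv ^^ 1) (\<lambda>w. k w t) w0) \<le> fact 1 * g t / r ^ 1" for t
  proof (rule Cauchy_inequality)
    show "(\<lambda>w. k w t) holomorphic_on ball w0 r"
      by (rule holomorphic_on_subset[OF hol]) (meson ball_subset_cball sub order_trans)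
    show "continuous_on (cball w0 r) (\<lambda>w. k w t)"
      by (rule holomorphic_on_imp_continuous_on, rule holomorphic_on_subset[OF hol sub])
  qed (use r bound in \<open>auto simp: dist_norm norm_minus_commute\<close>)
  then have "norm (D t) \<le> g t / r" for t
    by (simp add: D_def)
  moreover have "D \<in> borel_measurable lborel"
    unfolding D_def using hol U w0
    by (intro borel_measurable_deriv_param[OF U w0 meas] holomorphic_on_imp_differentiable_at)
  ultimately have D_int: "integrable lborel D"
    using g g0 r by (intro Bochner_Integration.integrable_bound[of _ "\<lambda>t. g t / r" D]) (auto intro!: AE_I2)
  have estimate: "norm (F (w0 + h) - F w0 - h * integral\<^sup>L lborel D) \<le> 8 / r\<^sup>2 * integral\<^sup>L lborel g * norm h ^ 2"
    if h: "norm h \<le> r / 2" for h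
  proof -
    have int: "integrable lborel (k (w0 + h))" "integrable lborel (k w0)"
      using h r by (auto intro!: k_int simp: dist_norm)
    have "F (w0 + h) - F w0 - h * integral\<^sup>L lborel D = (\<integral>t. k (w0 + h) t - k w0 t - h * D t \<partial>lborel)"
      unfolding F_def using int D_int by simp
    also have "norm \<dots> \<le> (\<integral>t. norm (k (w0 + h) t - k w0 t - h * D t) \<partial>lborel)"
      by (rule integral_norm_bound)
    also have "\<dots> \<le> (\<integral>t. 8 * g t / r\<^sup>2 * norm h ^ 2 \<partial>lborel)"
    proof (rule integral_mono)
      show "norm (k (w0 + h) t - k w0 t - h * D t) \<le> 8 * g t / r\<^sup>2 * norm h ^ 2" for t
        unfolding D_def using h by (intro holomorphic_second_order_bound[OF hol[of t] U r sub] bound)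
    qed (use int D_int g in auto)
    finally show ?thesis by simp
  qed
  have "norm ((F (w0 + h) - F w0) / h - integral\<^sup>L lborel D)
               \<le> 8 / r\<^sup>2 * integral\<^sup>L lborel g * norm h" if "h \<noteq> 0" "norm h < r / 2" for h
  proof -
    have "(F (w0 + h) - F w0) / h - integral\<^sup>L lborel D = (F (w0 + h) - F w0 - h * integral\<^sup>L lborel D) / h"
      using that by (simp add: field_simps)
    then show ?thesis
      using that estimate[of h]
      by (simp add: norm_divide divide_le_eq power2_eq_square mult.assoc)
  qed
  then have "\<forall>\<^sub>F h in at 0. norm ((F (w0 + h) - F w0) / h - integral\<^sup>L lborel D)
               \<le> 8 / r\<^sup>2 * integral\<^sup>L lborel g * norm h"
    using r unfolding eventually_at by (intro exI[of _ "r / 2"]) (simp add: dist_norm)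
  moreover have "((\<lambda>h. 8 / r\<^sup>2 * integral\<^sup>L lborel g * norm h) \<longlongrightarrow> 0) (at (0::complex))"
    using r by (auto intro!: tendsto_eq_intros)
  ultimately have "((\<lambda>h. (F (w0 + h) - F w0) / h - integral\<^sup>L lborel D) \<longlongrightarrow> 0) (at 0)"
    by (rule Lim_null_comparison)
  then show "\<exists>f'. ((\<lambda>w. \<integral>t. k w t \<partial>lborel) has_field_derivative f') (at w0)"
    unfolding DERIV_def F_def by (auto simp: LIM_zero_iff)
qed

section \<open>The function \<open>h\<^sub>M\<close>\<close>

lemma bdd_below_hM_terms: "(\<forall>p. (N::nat\<Rightarrow>real) p > 0) \<Longrightarrow> t > 0 \<Longrightarrow> bdd_below (range (\<lambda>p. N p * t ^ p))"
  by (rule bdd_belowI[of _ 0]) (auto intro!: mult_nonneg_nonneg less_imp_le)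

lemma hM_le: assumes "\<forall>p. N p > 0" "t > 0" shows "hM N t \<le> N p * t ^ p"
  unfolding hM_def using assms by (auto intro!: cINF_lower bdd_below_hM_terms)

lemma hM_nonneg: assumes "\<forall>p. N p > 0" shows "hM N t \<ge> 0"
proof (cases "t > 0")
  case True
  have "0 \<le> (INF p. N p * t ^ p)"
    by (rule cINF_greatest) (use assms True in \<open>auto intro!: mult_nonneg_nonneg less_imp_le\<close>)
  then show ?thesis unfolding hM_def using True by simp
qed (simp add: hM_def)

lemma hM_greatest: assumes "t > 0" "\<And>p. c \<le> N p * t ^ p" shows "c \<le> hM N t"
  unfolding hM_def using assms by (auto intro!: cINF_greatest)

lemma hM_le_1: assumes "\<forall>p. N p > 0" "N 0 = 1" "t > 0" shows "hM N t \<le> 1"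
  using hM_le[OF assms(1,3), of 0] assms(2) by simp

lemma hM_mono: assumes "\<forall>p. N p > 0" "t \<le> t'" shows "hM N t \<le> hM N t'"
proof (cases "t > 0")
  case True
  show ?thesis
  proof (rule hM_greatest)
    show "0 < t'" using True assms by simp
    fix p
    have "hM N t \<le> N p * t ^ p" by (rule hM_le[OF assms(1) True])
    also have "\<dots> \<le> N p * t' ^ p" using assms True by (intro mult_left_mono power_mono) (auto intro: less_imp_le)
    finally show "hM N t \<le> N p * t' ^ p" .
  qed
next
  case False
  then show ?thesis using hM_nonneg[OF assms(1)] by (simp add: hM_def)
qed

lemma mono_hM: "\<forall>p. N p > 0 \<Longrightarrow> mono (hM N)"
  by (auto intro: monoI hM_mono)

lemma hM_divide_le_square:
  assumes pos: "\<forall>p. N p > 0" and A: "A > 0" and mu: "\<And>p l. N (p + l) \<le> A ^ (p + l) * N p * N l"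
    and t: "t > 0"
  shows "hM N (t / A) \<le> (hM N t)\<^sup>2"
proof -
  let ?h = "hM N t"
  have tA: "t / A > 0" using t A by simp
  have 1: "hM N (t / A) \<le> (N p * t ^ p) * (N q * t ^ q)" for p q
  proof -
    have "hM N (t / A) \<le> N (p + q) * (t / A) ^ (p + q)" by (rule hM_le[OF pos tA])
    also have "\<dots> \<le> (A ^ (p + q) * N p * N q) * (t / A) ^ (p + q)"
      using mu[of p q] tA by (intro mult_right_mono) auto
    also have "\<dots> = (N p * t ^ p) * (N q * t ^ q)"
      using A by (simp add: power_divide power_add field_simps)
    finally show ?thesis .
  qed
  have 2: "hM N (t / A) \<le> (N p * t ^ p) * ?h" for p
  proof -
    have a: "N p * t ^ p > 0" using pos t by auto
    have "hM N (t / A) / (N p * t ^ p) \<le> ?h"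
      by (rule hM_greatest[OF t]) (use 1 a in \<open>auto simp: divide_le_eq mult.commute\<close>)
    then show ?thesis using a by (simp add: divide_le_eq mult.commute)
  qed
  show ?thesis
  proof (cases "?h > 0")
    case True
    have "hM N (t / A) / ?h \<le> ?h"
      by (rule hM_greatest[OF t]) (use 2 True in \<open>auto simp: divide_le_eq mult.commute\<close>)
    then show ?thesis using True by (simp add: divide_le_eq power2_eq_square)
  next
    case False
    then have "?h = 0" using hM_nonneg[OF pos, of t] by simp
    then show ?thesis using 2[of 0] by simp
  qed
qed

lemma hM_divide_power_le:
  assumes pos: "\<forall>p. N p > 0" and N0: "N 0 = 1" and A: "A \<ge> 1" and mu: "\<And>p l. N (p + l) \<le> A ^ (p + l) * N p * N l"
    and t: "t > 0"
  shows "hM N (t / A ^ k) \<le> (hM N t) ^ (2 ^ k)"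
proof (induction k)
  case 0 then show ?case by simp
next
  case (Suc k)
  have tk: "t / A ^ k > 0" using t A by simp
  have "hM N (t / A ^ Suc k) = hM N ((t / A ^ k) / A)" by (simp add: field_simps)
  also have "\<dots> \<le> (hM N (t / A ^ k))\<^sup>2" using A by (intro hM_divide_le_square[OF pos _ mu tk]) auto
  also have "\<dots> \<le> ((hM N t) ^ (2 ^ k))\<^sup>2"
    using Suc.IH hM_nonneg[OF pos] by (intro power_mono) auto
  also have "\<dots> = (hM N t) ^ (2 ^ Suc k)" by (simp add: power_mult[symmetric] mult.commute)
  finally show ?case .
qed

lemma hM_powr_le:
  assumes pos: "\<forall>p. M p > 0" and s: "s > 0" and y: "y > 0"
  shows "hM (\<lambda>p. M p powr s) y powr (1 / s) \<le> hM M (y powr (1 / s))"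
proof (rule hM_greatest)
  show "0 < y powr (1 / s)" using y by simp
  fix p
  have pos': "\<forall>p. M p powr s > 0"
  proof
    fix p show "M p powr s > 0" using pos[rule_format, of p] by simp
  qed
  have "hM (\<lambda>p. M p powr s) y powr (1 / s) \<le> (M p powr s * y ^ p) powr (1 / s)"
    using hM_le[OF pos' y, of p] hM_nonneg[OF pos', of y] s by (intro powr_mono2) auto
  also have "\<dots> = M p * (y powr (1 / s)) ^ p"
  proof -
    have Mp: "M p > 0" using pos by simp
    have "(M p powr s * y ^ p) powr (1 / s) = (M p powr s) powr (1/s) * (y powr real p) powr (1 / s)"
      using Mp y by (simp add: powr_mult powr_realpow)
    also have "\<dots> = M p * (y powr (1 / s)) powr real p"
      using s Mp by (simp add: powr_powr mult.commute)
    also have "\<dots> = M p * (y powr (1 / s)) ^ p" using y by (simp add: powr_realpow)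
    finally show ?thesis .
  qed
  finally show "hM (\<lambda>p. M p powr s) y powr (1 / s) \<le> M p * (y powr (1 / s)) ^ p" .
qed

lemma times_power_eq_prod_quot:
  fixes N :: "nat \<Rightarrow> real"
  assumes pos: "\<forall>p. N p > 0" and N0: "N 0 = 1"
  shows "N p * t ^ p = (\<Prod>j<p. N (Suc j) / N j * t)"
proof (induction p)
  case 0 then show ?case using N0 by simp
next
  case (Suc p)
  have "N p \<noteq> 0" using pos[rule_format, of p] by simp
  then have "N (Suc p) * t ^ Suc p = (N p * t ^ p) * (N (Suc p) / N p * t)"
    by (simp add: field_simps)
  then show ?case using Suc.IH by simp
qed

lemma power_le_hM:
  assumes pos: "\<forall>p. N p > 0" and N0: "N 0 = 1" and C: "C > 0" and G: "G > 0"
    and q: "\<And>j. N (Suc j) / N j \<ge> C * (real j + 1) powr G"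
    and t: "t > 0" and Ct: "C * t < 1"
  shows "hM N t \<ge> (C * t) ^ nat \<lceil>(C * t) powr (- 1 / G)\<rceil>"
proof (rule hM_greatest[OF t])
  fix p
  define K where "K = nat \<lceil>(C * t) powr (- 1 / G)\<rceil>"
  have fac1: "N (Suc j) / N j * t \<ge> C * t" for j
  proof -
    have "C * t \<le> C * (real j + 1) powr G * t" using C t G
      by (simp add: ge_one_powr_ge_zero)
    also have "\<dots> \<le> N (Suc j) / N j * t" using q[of j] t by (intro mult_right_mono) auto
    finally show ?thesis .
  qed
  have qt: "C * t * (real j + 1) powr G \<le> N (Suc j) / N j * t" for j
    using mult_right_mono[OF q[of j], of t] t by (simp add: algebra_simps)
  have fac2: "N (Suc j) / N j * t \<ge> 1" if "j \<ge> K" for j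
  proof -
    have Ctp: "C * t > 0" using C t by simp
    have "(C * t) powr (- 1 / G) \<le> real K" unfolding K_def by linarith
    also have "\<dots> \<le> real j + 1" using that by simp
    finally have a: "(C * t) powr (- 1 / G) \<le> real j + 1" .
    have "((C * t) powr (- 1 / G)) powr G \<le> (real j + 1) powr G"
      using a G by (intro powr_mono2) auto
    also have "((C * t) powr (- 1 / G)) powr G = 1 / (C * t)"
      using G Ctp by (subst powr_powr) (simp add: powr_minus_divide)
    finally have "1 / (C * t) \<le> (real j + 1) powr G" .
    then have "1 \<le> C * t * (real j + 1) powr G" using Ctp by (simp add: divide_le_eq mult.commute)
    also have "\<dots> \<le> N (Suc j) / N j * t" by (rule qt)
    finally show ?thesis .
  qed
  have ind: "(\<Prod>j<n. N (Suc j) / N j * t) \<ge> (C * t) ^ min n K" for n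
  proof (induction n)
    case 0 then show ?case by simp
  next
    case (Suc n)
    have nn: "(C * t) ^ min n K \<ge> 0" using C t by simp
    have pr: "0 \<le> (\<Prod>j<n. N (Suc j) / N j * t)"
      by (rule prod_nonneg) (use pos t in \<open>auto intro!: mult_nonneg_nonneg divide_nonneg_nonneg less_imp_le\<close>)
    have ct: "0 \<le> C * t" using C t by simp
    show ?case
    proof (cases "n < K")
      case True
      then have "min (Suc n) K = Suc (min n K)" by simp
      then have "(C * t) ^ min (Suc n) K = (C * t) ^ min n K * (C * t)" by simp
      also have "\<dots> \<le> (\<Prod>j<n. N (Suc j) / N j * t) * (N (Suc n) / N n * t)"
        by (rule mult_mono[OF Suc.IH fac1[of n] pr ct])
      finally show ?thesis by simp
    next
      case False
      then have "min (Suc n) K = min n K" by simp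
      then have "(C * t) ^ min (Suc n) K = (C * t) ^ min n K * 1" by simp
      also have "\<dots> \<le> (\<Prod>j<n. N (Suc j) / N j * t) * (N (Suc n) / N n * t)"
        by (rule mult_mono[OF Suc.IH fac2[of n] pr]) (use False in auto)
      finally show ?thesis by simp
    qed
  qed
  have "(C * t) ^ K \<le> (C * t) ^ min p K"
    using C t Ct by (intro power_decreasing) auto
  also have "\<dots> \<le> N p * t ^ p" using ind[of p] times_power_eq_prod_quot[OF pos N0, of p t] by simp
  finally show "(C * t) ^ nat \<lceil>(C * t) powr (- 1 / G)\<rceil> \<le> N p * t ^ p" unfolding K_def .
qed

lemma hM_eq_1:
  assumes pos: "\<forall>p. N p > 0" and N0: "N 0 = 1" and C: "C > 0" and G: "G > 0"
    and q: "\<And>j. N (Suc j) / N j \<ge> C * (real j + 1) powr G"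
    and t: "C * t \<ge> 1"
  shows "hM N t = 1"
proof -
  have t0: "t > 0" using C t by (metis mult_le_0_iff not_less zero_less_one order_trans_rules(21) less_le_not_le)
  have "1 \<le> hM N t"
  proof (rule hM_greatest[OF t0])
    fix p
    have "(\<Prod>j<p. (1::real)) \<le> (\<Prod>j<p. N (Suc j) / N j * t)"
    proof (rule prod_mono)
      fix j assume "j \<in> {..<p}"
      have "1 \<le> C * t * 1" using t by simp
      also have "\<dots> \<le> C * t * (real j + 1) powr G" using C t0 G by (intro mult_left_mono) (auto simp: ge_one_powr_ge_zero)
      also have "\<dots> \<le> N (Suc j) / N j * t" using mult_right_mono[OF q[of j], of t] t0 by (simp add: algebra_simps)
      finally show "0 \<le> (1::real) \<and> 1 \<le> N (Suc j) / N j * t" by simp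
    qed
    then show "1 \<le> N p * t ^ p" using times_power_eq_prod_quot[OF pos N0, of p t] by simp
  qed
  then show ?thesis using hM_le_1[OF pos N0 t0] by simp
qed



lemma strongly_regularD:
  assumes "strongly_regular M"
  shows "M 0 = 1" "\<forall>p. M p > 0" "\<And>p. M (Suc p) ^ 2 \<le> M p * M (Suc (Suc p))"
    "\<exists>A\<ge>1. \<forall>p l. M (p + l) \<le> A ^ (p + l) * M p * M l"
proof -
  show "M 0 = 1" "\<forall>p. M p > 0" using assms unfolding strongly_regular_def by auto
  show "\<And>p. M (Suc p) ^ 2 \<le> M p * M (Suc (Suc p))"
  proof -
    fix p
    have "\<forall>p\<ge>1. (M p)\<^sup>2 \<le> M (p - 1) * M (p + 1)" using assms unfolding strongly_regular_def by blast
    from this[rule_format, of "Suc p"] show "M (Suc p) ^ 2 \<le> M p * M (Suc (Suc p))" by simp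
  qed
  obtain A where A: "A > 0" "\<forall>p l. M (p + l) \<le> A ^ (p + l) * M p * M l"
    using assms unfolding strongly_regular_def by blast
  have pos: "\<forall>p. M p > 0" using assms unfolding strongly_regular_def by auto
  show "\<exists>A\<ge>1. \<forall>p l. M (p + l) \<le> A ^ (p + l) * M p * M l"
  proof (intro exI[of _ "max A 1"] conjI allI)
    fix p l
    have "M (p + l) \<le> A ^ (p + l) * M p * M l" using A by blast
    also have "\<dots> \<le> (max A 1) ^ (p + l) * M p * M l"
      using pos A by (intro mult_right_mono power_mono) (auto intro: less_imp_le)
    finally show "M (p + l) \<le> (max A 1) ^ (p + l) * M p * M l" .
  qed simp
qed

lemma mono_quot_seq:
  assumes "strongly_regular M" shows "mono (quot_seq M)"
proof (rule incseq_SucI)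
  fix p
  have pos: "\<forall>p. M p > 0" and l: "M (Suc p) ^ 2 \<le> M p * M (Suc (Suc p))" using strongly_regularD[OF assms] by auto
  have a: "M p > 0" "M (Suc p) > 0" using pos by auto
  have "M (Suc p) / M p \<le> M (Suc (Suc p)) / M (Suc p)"
    using l a by (simp add: divide_le_eq le_divide_eq power2_eq_square mult.commute)
  then show "quot_seq M p \<le> quot_seq M (Suc p)" by (simp add: quot_seq_def)
qed

lemma quot_powr_polynomial_growth:
  assumes sr: "strongly_regular M" and s: "s > 0" and sg: "1 < s * gammaM M"
  shows "\<exists>C G. C > 0 \<and> G > 1 \<and> (\<forall>j. M (Suc j) powr s / M j powr s \<ge> C * (real j + 1) powr G)"
proof -
  have pos: "\<forall>p. M p > 0" and M0: "M 0 = 1" using strongly_regularD[OF sr] by auto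
  let ?X = "{g. P_gamma g M}"
  have ne: "0 \<in> ?X"
    unfolding P_gamma_def using mono_quot_seq[OF sr]
    by (intro CollectI exI[of _ "quot_seq M"] exI[of _ 1]) (auto simp: add_nonneg_eq_0_iff)
  have "\<exists>g\<in>?X. 1 / s < g"
  proof (cases "bdd_above ?X")
    case True
    have "1 / s < gammaM M" using sg s by (simp add: divide_less_eq mult.commute)
    then show ?thesis using less_cSup_iff[of ?X "1/s"] ne True unfolding gammaM_def by blast
  next
    case False
    then show ?thesis unfolding bdd_above_def by (meson not_le_imp_less)
  qed
  then obtain g where Pg: "P_gamma g M" and g: "1 / s < g" by blast
  obtain m' a where a: "a \<ge> 1" and ma: "\<And>p. quot_seq M p / a \<le> m' p \<and> m' p \<le> a * quot_seq M p"
    and mono: "mono (\<lambda>p. m' p / (real p + 1) powr g)"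
    using Pg unfolding P_gamma_def by blast
  have q0: "quot_seq M 0 = M 1" using M0 by (simp add: quot_seq_def)
  have M1: "M 1 > 0" using pos by simp
  define C0 where "C0 = M 1 / a ^ 2"
  have C0: "C0 > 0" using a M1 by (simp add: C0_def)
  have low: "quot_seq M j \<ge> C0 * (real j + 1) powr g" for j
  proof -
    have "m' 0 / (real 0 + 1) powr g \<le> m' j / (real j + 1) powr g" using monoD[OF mono, of 0 j] by simp
    then have "m' 0 \<le> m' j / (real j + 1) powr g" by simp
    then have 1: "m' 0 * (real j + 1) powr g \<le> m' j" by (simp add: le_divide_eq)
    have 2: "M 1 / a \<le> m' 0" using ma[of 0] q0 by simp
    have "C0 * (real j + 1) powr g = (M 1 / a) * (real j + 1) powr g / a"
      by (simp add: C0_def power2_eq_square)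
    also have "\<dots> \<le> m' 0 * (real j + 1) powr g / a"
      using 2 a by (intro divide_right_mono mult_right_mono) auto
    also have "\<dots> \<le> m' j / a" using 1 a by (intro divide_right_mono) auto
    also have "\<dots> \<le> quot_seq M j" using ma[of j] a by (simp add: divide_le_eq mult.commute)
    finally show ?thesis .
  qed
  show ?thesis
  proof (intro exI conjI allI)
    show "C0 powr s > 0" using C0 by simp
    show "g * s > 1" using g s by (simp add: divide_less_eq mult.commute)
    fix j
    have "C0 powr s * (real j + 1) powr (g * s) = (C0 * (real j + 1) powr g) powr s"
      using C0 by (simp add: powr_mult powr_powr)
    also have "\<dots> \<le> (quot_seq M j) powr s"
      using low[of j] C0 s by (intro powr_mono2) auto
    also have "\<dots> = M (Suc j) powr s / M j powr s"
      using pos by (simp add: quot_seq_def powr_divide less_imp_le)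
    finally show "C0 powr s * (real j + 1) powr (g * s) \<le> M (Suc j) powr s / M j powr s" .
  qed
qed



lemma integrable_abs_powr:
  assumes b: "\<beta> < 1" and c: "c \<ge> 0"
  shows "integrable lborel (\<lambda>t::real. indicator {-c..c} t * \<bar>t\<bar> powr (- \<beta>))"
proof -
  define g where "g t = indicator {0..c} t * t powr (- \<beta>)" for t :: real
  have "(\<lambda>t. t powr (- \<beta>)) integrable_on {0..c}"
    by (rule integrable_on_powr_from_0) (use b c in auto)
  then have "(\<lambda>t. t powr (- \<beta>)) absolutely_integrable_on {0..c}"
    by (subst absolutely_integrable_on_iff_nonneg) auto
  then have "integrable lebesgue (\<lambda>t. indicator {0..c} t *\<^sub>R t powr (- \<beta>))"
    unfolding set_integrable_def .
  then have gi: "integrable lborel g"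
    unfolding g_def by (subst (asm) integrable_completion) auto
  have gi2: "integrable lborel (\<lambda>t. g (0 + (-1) * t))"
    by (rule lborel_integrable_real_affine[OF gi]) simp
  have eq: "indicator {-c..c} t * \<bar>t\<bar> powr (- \<beta>) = g t + g (0 + (-1) * t)" for t :: real
    unfolding g_def by (cases "t = 0"; cases "t > 0") (auto simp: indicator_def)
  show ?thesis unfolding eq using gi gi2 by (rule Bochner_Integration.integrable_add)
qed

context
  fixes N :: "nat \<Rightarrow> real" and C G :: real
  assumes pos: "\<forall>p. N p > 0" and N0: "N 0 = 1" and C: "C > 0" and G: "G > 1"
    and quot: "\<And>j. N (Suc j) / N j \<ge> C * (real j + 1) powr G"
begin

lemma hM_pos:
  assumes t: "t > 0" shows "hM N t > 0"
proof (cases "C * t < 1")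
  case True
  have "0 < (C * t) ^ nat \<lceil>(C * t) powr (- 1 / G)\<rceil>" using C t by simp
  also have "\<dots> \<le> hM N t" using G by (intro power_le_hM[OF pos N0 C _ quot t True]) simp
  finally show ?thesis .
qed (use hM_eq_1[OF pos N0 C _ quot] G in auto)

lemma ln_hM_abs_nonpos: "ln (hM N \<bar>t\<bar>) \<le> 0"
  using hM_pos[of "\<bar>t\<bar>"] hM_le_1[OF pos N0, of "\<bar>t\<bar>"] by (cases "t = 0") (simp_all add: hM_def)

text \<open>Near the origin \<open>-ln (hM N t) \<le> K ln (1/(C t))\<close> with \<open>K \<approx> (C t)\<^bsup>-1/G\<^esup>\<close>, which is
  integrable because \<open>G > 1\<close>; away from the origin \<open>hM N t = 1\<close>.\<close>
lemma norm_ln_hM_abs_le: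
  defines "\<beta> \<equiv> 1 / G + (1 - 1 / G) / 2"
  shows "norm (ln (hM N \<bar>t\<bar>)) \<le> 4 / (1 - 1 / G) * C powr (- \<beta>) * (indicator {-(1/C)..1/C} t * \<bar>t\<bar> powr (- \<beta>))"
proof (cases "t = 0 \<or> C * \<bar>t\<bar> \<ge> 1")
  case True
  then show ?thesis
    using hM_eq_1[OF pos N0 C _ quot, of "\<bar>t\<bar>"] G by (auto simp: hM_def indicator_def)
next
  case False
  define \<epsilon> where "\<epsilon> = (1 - 1 / G) / 2"
  define y where "y = 1 / (C * \<bar>t\<bar>)"
  define K where "K = nat \<lceil>(C * \<bar>t\<bar>) powr (- 1 / G)\<rceil>"
  have \<epsilon>: "\<epsilon> > 0" using G by (simp add: \<epsilon>_def)
  have t0: "\<bar>t\<bar> > 0" and Ct: "C * \<bar>t\<bar> < 1" using False by auto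
  have y: "y > 1" using Ct t0 C by (simp add: y_def)
  have "(C * \<bar>t\<bar>) ^ K \<le> hM N \<bar>t\<bar>"
    unfolding K_def using G t0 Ct by (intro power_le_hM[OF pos N0 C _ quot]) auto
  then have "ln ((C * \<bar>t\<bar>) ^ K) \<le> ln (hM N \<bar>t\<bar>)"
    using C t0 by (intro ln_mono) auto
  then have l1: "- ln (hM N \<bar>t\<bar>) \<le> real K * ln y"
    using C t0 by (simp add: y_def ln_realpow ln_div)
  have y1: "y powr (1 / G) \<ge> 1" using y G by (simp add: ge_one_powr_ge_zero)
  have "real K = of_int \<lceil>y powr (1 / G)\<rceil>"
    unfolding K_def using y1 C t0 by (simp add: y_def powr_divide powr_minus_divide)
  also have "\<dots> \<le> 2 * y powr (1 / G)"
    using of_int_ceiling_le_add_one[of "y powr (1 / G)"] y1 by linarith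
  finally have K: "real K \<le> 2 * y powr (1 / G)" .
  have "norm (ln (hM N \<bar>t\<bar>)) = - ln (hM N \<bar>t\<bar>)" using ln_hM_abs_nonpos[of t] by simp
  also have "\<dots> \<le> (2 * y powr (1 / G)) * (y powr \<epsilon> / \<epsilon>)"
    using l1 K ln_powr_bound[of y \<epsilon>] y \<epsilon> by (smt (verit) ln_ge_zero mult_mono of_nat_0_le_iff)
  also have "\<dots> = 2 / \<epsilon> * y powr \<beta>"
    by (simp add: \<beta>_def \<epsilon>_def powr_add)
  also have "y powr \<beta> = C powr (- \<beta>) * \<bar>t\<bar> powr (- \<beta>)"
    using C t0 by (simp add: y_def powr_divide powr_minus_divide powr_mult)
  finally have "norm (ln (hM N \<bar>t\<bar>)) \<le> 4 / (1 - 1 / G) * C powr (- \<beta>) * \<bar>t\<bar> powr (- \<beta>)"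
    by (simp add: \<epsilon>_def)
  moreover have "\<bar>t\<bar> \<le> 1 / C" using Ct C by (simp add: field_simps)
  ultimately show ?thesis by (simp add: indicator_def abs_le_iff)
qed

lemma integrable_ln_hM_abs: "integrable lborel (\<lambda>t. ln (hM N \<bar>t\<bar>))"
proof (rule Bochner_Integration.integrable_bound)
  define \<beta> where "\<beta> = 1 / G + (1 - 1 / G) / 2"
  have "\<beta> < 1" using G by (simp add: \<beta>_def field_simps)
  then show "integrable lborel (\<lambda>t. 4 / (1 - 1 / G) * C powr (- \<beta>) * (indicator {-(1/C)..1/C} t * \<bar>t\<bar> powr (- \<beta>)))"
    using C by (intro integrable_mult_right integrable_abs_powr) auto
  show "(\<lambda>t. ln (hM N \<bar>t\<bar>)) \<in> borel_measurable lborel"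
    using borel_measurable_mono[OF mono_hM[OF pos]] by measurable
  show "AE t in lborel. norm (ln (hM N \<bar>t\<bar>)) \<le> norm (4 / (1 - 1 / G) * C powr (- \<beta>) * (indicator {-(1/C)..1/C} t * \<bar>t\<bar> powr (- \<beta>)))"
    using norm_ln_hM_abs_le unfolding \<beta>_def by (intro AE_I2) (smt (verit) norm_ge_zero real_norm_def)
qed

end


section \<open>The Schwarz integral of the right half-plane\<close>

definition schwarz_kernel :: "complex \<Rightarrow> real \<Rightarrow> complex" where
  "schwarz_kernel \<Xi> t = (\<i> * t * \<Xi> - 1) / (\<i> * t - \<Xi>) / complex_of_real (1 + t\<^sup>2)"

definition schwarz_integral :: "(real \<Rightarrow> real) \<Rightarrow> complex \<Rightarrow> complex" where
  "schwarz_integral \<phi> \<Xi> = (LINT t|lborel. complex_of_real (\<phi> t) * schwarz_kernel \<Xi> t)"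

lemma schwarz_kernel_eq:
  assumes "Re \<Xi> > 0"
  shows "schwarz_kernel \<Xi> t = - \<i> * t / complex_of_real (1 + t\<^sup>2) + 1 / (\<Xi> - \<i> * t)"
proof -
  have nz: "\<Xi> - \<i> * t \<noteq> 0" "\<i> * t - \<Xi> \<noteq> 0"
    using assms by (auto simp: complex_eq_iff)
  have split: "(\<i> * t * \<Xi> - 1) / (\<i> * t - \<Xi>) = - \<i> * t + complex_of_real (1 + t\<^sup>2) / (\<Xi> - \<i> * t)"
    using nz by (simp add: field_simps power2_eq_square)
  have "complex_of_real (1 + t\<^sup>2) \<noteq> 0"
    by (metis of_real_eq_0_iff power2_less_0 add_eq_0_iff neg_less_0_iff_less zero_less_one)
  moreover have "(a + b / c) / b = a / b + 1 / c" if "b \<noteq> 0" for a b c :: complex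
    using that by (simp add: add_divide_distrib)
  ultimately show ?thesis
    unfolding schwarz_kernel_def split by blast
qed

lemma norm_schwarz_kernel_le:
  assumes "Re \<Xi> > 0"
  shows "norm (schwarz_kernel \<Xi> t) \<le> 1 + 1 / Re \<Xi>"
proof -
  have "norm (schwarz_kernel \<Xi> t) \<le> norm (- \<i> * t / complex_of_real (1 + t\<^sup>2)) + norm (1 / (\<Xi> - \<i> * t))"
    unfolding schwarz_kernel_eq[OF assms] by (rule norm_triangle_ineq)
  also have "norm (- \<i> * t / complex_of_real (1 + t\<^sup>2)) = \<bar>t\<bar> / (1 + t\<^sup>2)"
    by (simp add: norm_divide norm_mult del: of_real_add of_real_power)
  also have "\<dots> \<le> 1"
  proof -
    have "\<bar>t\<bar> \<le> 1 + t\<^sup>2"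
      using zero_le_power2[of "\<bar>t\<bar> - 1 / 2"] by (simp add: power2_eq_square algebra_simps)
    then show ?thesis by (simp add: add_pos_nonneg)
  qed
  also have "norm (1 / (\<Xi> - \<i> * t)) \<le> 1 / Re \<Xi>"
    using complex_Re_le_cmod[of "\<Xi> - \<i> * t"] assms by (simp add: norm_divide frac_le)
  finally show ?thesis by simp
qed

lemma Re_schwarz_kernel:
  assumes "Re \<Xi> > 0"
  shows "Re (schwarz_kernel \<Xi> t) = Re \<Xi> / ((Re \<Xi>)\<^sup>2 + (t - Im \<Xi>)\<^sup>2)"
  unfolding schwarz_kernel_eq[OF assms]
  by (simp add: Re_divide power2_eq_square algebra_simps del: of_real_add of_real_power)

lemma continuous_on_schwarz_kernel:
  assumes "Re \<Xi> > 0"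
  shows "continuous_on UNIV (schwarz_kernel \<Xi>)"
  using assms unfolding schwarz_kernel_def
  by (intro continuous_intros) (auto simp: complex_eq_iff add_nonneg_eq_0_iff)

lemma integrable_schwarz_integrand:
  assumes \<phi>: "integrable lborel \<phi>" and \<Xi>: "Re \<Xi> > 0"
  shows "integrable lborel (\<lambda>t. complex_of_real (\<phi> t) * schwarz_kernel \<Xi> t)"
proof (rule Bochner_Integration.integrable_bound[of _ "\<lambda>t. norm (\<phi> t) * (1 + 1 / Re \<Xi>)"])
  show "integrable lborel (\<lambda>t. norm (\<phi> t) * (1 + 1 / Re \<Xi>))" using \<phi> by simp
  show "(\<lambda>t. complex_of_real (\<phi> t) * schwarz_kernel \<Xi> t) \<in> borel_measurable lborel"
    using borel_measurable_integrable[OF \<phi>] borel_measurable_continuous_onI[OF continuous_on_schwarz_kernel[OF \<Xi>]]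
    by measurable
  show "AE t in lborel. norm (complex_of_real (\<phi> t) * schwarz_kernel \<Xi> t) \<le> norm (norm (\<phi> t) * (1 + 1 / Re \<Xi>))"
    using norm_schwarz_kernel_le[OF \<Xi>] \<Xi>
    by (intro AE_I2) (simp add: norm_mult mult_left_mono add_pos_pos)
qed

lemma holomorphic_on_schwarz_integral:
  assumes \<phi>: "integrable lborel \<phi>"
  shows "schwarz_integral \<phi> holomorphic_on {\<Xi>. Re \<Xi> > 0}"
  unfolding schwarz_integral_def
proof (rule holomorphic_on_lborel_integral)
  show "open {\<Xi>. Re \<Xi> > 0}" by (simp add: open_halfspace_Re_gt)
  show "(\<lambda>t. complex_of_real (\<phi> t) * schwarz_kernel \<Xi> t) \<in> borel_measurable lborel" if "\<Xi> \<in> {\<Xi>. Re \<Xi> > 0}" for \<Xi>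
    using integrable_schwarz_integrand[OF \<phi>] that by auto
  show "(\<lambda>\<Xi>. complex_of_real (\<phi> t) * schwarz_kernel \<Xi> t) holomorphic_on {\<Xi>. Re \<Xi> > 0}" for t
    unfolding schwarz_kernel_def by (auto intro!: holomorphic_intros simp: complex_eq_iff)
next
  fix \<Xi>0 assume "\<Xi>0 \<in> {\<Xi>. Re \<Xi> > 0}"
  then have r: "Re \<Xi>0 / 2 > 0" by simp
  have Re_ge: "Re \<Xi> \<ge> Re \<Xi>0 / 2" if "\<Xi> \<in> cball \<Xi>0 (Re \<Xi>0 / 2)" for \<Xi>
    using that abs_Re_le_cmod[of "\<Xi> - \<Xi>0"] by (simp add: dist_norm norm_minus_commute)
  show "\<exists>r>0. \<exists>g. cball \<Xi>0 r \<subseteq> {\<Xi>. Re \<Xi> > 0} \<and> integrable lborel g \<and>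
          (\<forall>\<Xi>\<in>cball \<Xi>0 r. \<forall>t. norm (complex_of_real (\<phi> t) * schwarz_kernel \<Xi> t) \<le> g t)"
  proof (intro exI conjI ballI allI)
    show "cball \<Xi>0 (Re \<Xi>0 / 2) \<subseteq> {\<Xi>. Re \<Xi> > 0}" using Re_ge r by force
    show "integrable lborel (\<lambda>t. norm (\<phi> t) * (1 + 1 / (Re \<Xi>0 / 2)))" using \<phi> by simp
    fix \<Xi> t assume "\<Xi> \<in> cball \<Xi>0 (Re \<Xi>0 / 2)"
    then have "Re \<Xi>0 / 2 \<le> Re \<Xi>" by (rule Re_ge)
    then have "norm (schwarz_kernel \<Xi> t) \<le> 1 + 1 / (Re \<Xi>0 / 2)"
      using norm_schwarz_kernel_le[of \<Xi> t] r by (smt (verit) frac_le)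
    then show "norm (complex_of_real (\<phi> t) * schwarz_kernel \<Xi> t) \<le> norm (\<phi> t) * (1 + 1 / (Re \<Xi>0 / 2))"
      by (simp add: norm_mult mult_left_mono)
  qed (use r in auto)
qed

lemma Re_schwarz_integral:
  assumes \<phi>: "integrable lborel \<phi>" and \<Xi>: "Re \<Xi> > 0"
  shows "Re (schwarz_integral \<phi> \<Xi>) = (LBINT t. \<phi> t * (Re \<Xi> / ((Re \<Xi>)\<^sup>2 + (t - Im \<Xi>)\<^sup>2)))"
  unfolding schwarz_integral_def
    integral_bounded_linear[OF bounded_linear_Re integrable_schwarz_integrand[OF \<phi> \<Xi>], symmetric, simplified]
  using Re_schwarz_kernel[OF \<Xi>] by simp

lemma Re_schwarz_integral_nonpos:
  assumes \<phi>: "integrable lborel \<phi>" and \<Xi>: "Re \<Xi> > 0" and nonpos: "\<And>t. \<phi> t \<le> 0"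
  shows "Re (schwarz_integral \<phi> \<Xi>) \<le> 0"
proof -
  have "\<phi> t * (Re \<Xi> / ((Re \<Xi>)\<^sup>2 + (t - Im \<Xi>)\<^sup>2)) \<le> 0" for t
    using nonpos[of t] \<Xi> by (intro mult_nonpos_nonneg) auto
  then have "0 \<le> (LBINT t. - (\<phi> t * (Re \<Xi> / ((Re \<Xi>)\<^sup>2 + (t - Im \<Xi>)\<^sup>2))))"
    by (intro integral_nonneg_AE AE_I2) (metis neg_0_le_iff_le)
  then show ?thesis unfolding Re_schwarz_integral[OF \<phi> \<Xi>] by simp
qed

text \<open>On \<open>[Y - X, Y + X]\<close>, where \<open>X + \<i> Y = \<Xi>\<close>, the Poisson kernel is at least \<open>1 / (2 X)\<close> and
  \<open>ln (h \<bar>t\<bar>) \<le> ln (h (\<bar>Y\<bar> + X))\<close> by monotonicity; elsewhere the integrand is nonpositive.\<close>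
lemma Re_schwarz_integral_ln_le:
  fixes h :: "real \<Rightarrow> real"
  assumes \<phi>: "integrable lborel (\<lambda>t. ln (h \<bar>t\<bar>))" and \<Xi>: "Re \<Xi> > 0"
    and mono: "mono h" and pos: "\<And>t. t > 0 \<Longrightarrow> h t > 0" and le1: "\<And>t. t > 0 \<Longrightarrow> h t \<le> 1"
    and zero: "h 0 = 0"
  shows "Re (schwarz_integral (\<lambda>t. ln (h \<bar>t\<bar>)) \<Xi>) \<le> ln (h (\<bar>Im \<Xi>\<bar> + Re \<Xi>))"
proof -
  define X Y where "X = Re \<Xi>" and "Y = Im \<Xi>"
  define c where "c = ln (h (\<bar>Y\<bar> + X))"
  define P where "P t = X / (X\<^sup>2 + (t - Y)\<^sup>2)" for t
  have X: "X > 0" using \<Xi> by (simp add: X_def)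
  have P_pos: "P t > 0" for t using X by (simp add: P_def add_pos_nonneg)
  have P_le: "P t \<le> 1 / X" for t
    using X frac_le[of X X "X\<^sup>2" "X\<^sup>2 + (t - Y)\<^sup>2"] by (simp add: P_def power2_eq_square)
  have \<phi>_nonpos: "ln (h \<bar>t\<bar>) \<le> 0" for t
    using pos[of "\<bar>t\<bar>"] le1[of "\<bar>t\<bar>"] zero by (cases "t = 0") auto
  have "integrable lborel (\<lambda>t. ln (h \<bar>t\<bar>) * P t)"
  proof (rule Bochner_Integration.integrable_bound[of _ "\<lambda>t. ln (h \<bar>t\<bar>) * (1 / X)"])
    have "P \<in> borel_measurable borel"
      unfolding P_def using X by (intro borel_measurable_continuous_onI continuous_intros) (auto simp: add_pos_nonneg)
    then show "(\<lambda>t. ln (h \<bar>t\<bar>) * P t) \<in> borel_measurable lborel"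
      using borel_measurable_integrable[OF \<phi>] by measurable
    show "AE t in lborel. norm (ln (h \<bar>t\<bar>) * P t) \<le> norm (ln (h \<bar>t\<bar>) * (1 / X))"
    proof (intro AE_I2)
      fix t
      have "\<bar>ln (h \<bar>t\<bar>)\<bar> * P t \<le> \<bar>ln (h \<bar>t\<bar>)\<bar> * (1 / X)"
        using P_le by (intro mult_left_mono) auto
      then show "norm (ln (h \<bar>t\<bar>) * P t) \<le> norm (ln (h \<bar>t\<bar>) * (1 / X))"
        using P_pos[of t] X by (simp add: abs_mult)
    qed
  qed (use \<phi> in simp)
  moreover have "AE t in lborel. ln (h \<bar>t\<bar>) * P t \<le> indicator {Y - X..Y + X} t * (c / (2 * X))"
    using AE_lborel_singleton[of 0]
  proof eventually_elim
    fix t :: real assume "t \<noteq> 0"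
    show "ln (h \<bar>t\<bar>) * P t \<le> indicator {Y - X..Y + X} t * (c / (2 * X))"
    proof (cases "t \<in> {Y - X..Y + X}")
      case True
      have "X / (2 * X\<^sup>2) \<le> P t"
        unfolding P_def using True X abs_le_square_iff[of "t - Y" X]
        by (intro frac_le) (auto simp: add_pos_nonneg)
      then have "1 / (2 * X) \<le> P t" using X by (simp add: power2_eq_square)
      then have "ln (h \<bar>t\<bar>) * P t \<le> ln (h \<bar>t\<bar>) * (1 / (2 * X))"
        using \<phi>_nonpos by (rule mult_left_mono_neg)
      also have "\<dots> \<le> c * (1 / (2 * X))"
      proof -
        have "\<bar>t\<bar> \<le> \<bar>Y\<bar> + X" using True by auto
        then have "ln (h \<bar>t\<bar>) \<le> c"
          unfolding c_def using \<open>t \<noteq> 0\<close> pos[of "\<bar>t\<bar>"] monoD[OF mono] by (intro ln_mono) auto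
        then show ?thesis using X by (intro mult_right_mono) auto
      qed
      finally show ?thesis using True by simp
    qed (use \<phi>_nonpos P_pos in \<open>simp add: mult_nonpos_nonneg less_imp_le\<close>)
  qed
  ultimately have "(LBINT t. ln (h \<bar>t\<bar>) * P t) \<le> (LBINT t. indicator {Y - X..Y + X} t * (c / (2 * X)))"
    by (intro integral_mono_AE) (auto intro!: integrable_mult_left integrable_real_indicator simp: emeasure_lborel_Icc_eq)
  also have "\<dots> = c" using X by simp
  finally show ?thesis
    unfolding Re_schwarz_integral[OF \<phi> \<Xi>] by (simp add: P_def X_def Y_def c_def)
qed

section \<open>The kernel \<open>e\<^sub>M\<close>\<close>

lemma
  assumes sr: "strongly_regular M" and s: "s > 0" and sg: "1 < s * gammaM M"
  shows integrable_ln_hM_powr: "integrable lborel (\<lambda>t. ln (hM (\<lambda>p. M p powr s) \<bar>t\<bar>))"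
    and hM_powr_pos: "t > 0 \<Longrightarrow> hM (\<lambda>p. M p powr s) t > 0"
proof -
  obtain C G where C: "C > 0" and G: "G > 1" and quot: "\<And>j. M (Suc j) powr s / M j powr s \<ge> C * (real j + 1) powr G"
    using quot_powr_polynomial_growth[OF sr s sg] by blast
  have "\<forall>p. M p > 0" and M0: "M 0 = 1" using strongly_regularD[OF sr] by auto
  then have pos: "\<forall>p. M p powr s > 0" and N0: "M 0 powr s = 1"
    by (metis powr_gt_zero less_irrefl) (simp add: M0)
  show "integrable lborel (\<lambda>t. ln (hM (\<lambda>p. M p powr s) \<bar>t\<bar>))"
    by (rule integrable_ln_hM_abs[OF pos N0 C G quot])
  show "t > 0 \<Longrightarrow> hM (\<lambda>p. M p powr s) t > 0"
    by (rule hM_pos[OF pos N0 C G quot])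
qed

lemma hM_pos_strongly_regular:
  assumes sr: "strongly_regular M" and s: "s > 0" and sg: "1 < s * gammaM M" and t: "t > 0"
  shows "hM M t > 0"
proof -
  have pos: "\<forall>p. M p > 0" using strongly_regularD[OF sr] by auto
  have "0 < hM (\<lambda>p. M p powr s) (t powr s) powr (1 / s)"
    using hM_powr_pos[OF sr s sg, of "t powr s"] t by simp
  also have "\<dots> \<le> hM M ((t powr s) powr (1 / s))" using t by (intro hM_powr_le[OF pos s]) simp
  also have "(t powr s) powr (1 / s) = t" using s t by (simp add: powr_powr)
  finally show ?thesis .
qed

lemma GM_eq_schwarz_integral:
  "GM M s w = exp (complex_of_real (1 / pi) *
     schwarz_integral (\<lambda>t. ln (hM (\<lambda>p. M p powr s) \<bar>t\<bar>)) (exp (complex_of_real s * w)))"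
  unfolding GM_def schwarz_integral_def schwarz_kernel_def by (simp only: times_divide_eq_right)

lemma Re_exp_pos: "\<bar>s * Im w\<bar> < pi / 2 \<Longrightarrow> Re (exp (complex_of_real s * w)) > 0"
  by (simp add: Re_exp cos_gt_zero_pi abs_less_iff)

lemma GM_holomorphic:
  assumes sr: "strongly_regular M" and s: "s > 0" and sg: "1 < s * gammaM M"
  shows "GM M s holomorphic_on {w. \<bar>s * Im w\<bar> < pi / 2}"
proof -
  have "(\<lambda>w. schwarz_integral (\<lambda>t. ln (hM (\<lambda>p. M p powr s) \<bar>t\<bar>)) (exp (complex_of_real s * w)))
          holomorphic_on {w. \<bar>s * Im w\<bar> < pi / 2}"
    by (rule holomorphic_on_compose_gen[OF _ holomorphic_on_schwarz_integral[OF integrable_ln_hM_powr[OF sr s sg]],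
          unfolded o_def])
       (auto intro!: holomorphic_intros Re_exp_pos)
  then show ?thesis unfolding GM_eq_schwarz_integral[abs_def] by (auto intro!: holomorphic_intros)
qed

lemma GM_bounds:
  assumes sr: "strongly_regular M" and s: "s > 0" and sg: "1 < s * gammaM M"
    and w: "\<bar>s * Im w\<bar> < pi / 2"
  shows "norm (GM M s w) \<le> 1"
    and "norm (GM M s w) \<le> hM M (2 powr (1 / s) * exp (Re w)) powr (s / pi)"
proof -
  define hN where "hN = hM (\<lambda>p. M p powr s)"
  define \<Xi> where "\<Xi> = exp (complex_of_real s * w)"
  have \<Xi>: "Re \<Xi> > 0" using Re_exp_pos[OF w] by (simp add: \<Xi>_def)
  have pos: "\<forall>p. M p > 0" and N0: "M 0 = 1" using strongly_regularD[OF sr] by auto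
  then have pos_s: "\<forall>p. M p powr s > 0" by (metis powr_gt_zero less_irrefl)
  have hN_pos: "t > 0 \<Longrightarrow> hN t > 0" for t unfolding hN_def by (rule hM_powr_pos[OF sr s sg])
  have hN_le1: "t > 0 \<Longrightarrow> hN t \<le> 1" for t unfolding hN_def by (rule hM_le_1[OF pos_s]) (simp_all add: N0)
  have hN0: "hN 0 = 0" by (simp add: hN_def hM_def)
  have hN_mono: "mono hN" unfolding hN_def by (rule mono_hM[OF pos_s])
  note schwarz = integrable_ln_hM_powr[OF sr s sg, folded hN_def] \<Xi>
  have nG: "norm (GM M s w) = exp (Re (schwarz_integral (\<lambda>t. ln (hN \<bar>t\<bar>)) \<Xi>) / pi)"
    unfolding GM_eq_schwarz_integral hN_def \<Xi>_def by simp
  show "norm (GM M s w) \<le> 1"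
  proof -
    have "ln (hN \<bar>t\<bar>) \<le> 0" for t
      using hN_pos[of "\<bar>t\<bar>"] hN_le1[of "\<bar>t\<bar>"] hN0 by (cases "t = 0") auto
    then show ?thesis
      unfolding nG using Re_schwarz_integral_nonpos[OF schwarz] by (simp add: divide_nonpos_pos)
  qed
  define y where "y = 2 * norm \<Xi>"
  have ny: "norm \<Xi> = exp (s * Re w)" by (simp add: \<Xi>_def)
  have y: "y > 0" by (simp add: y_def ny)
  have XY: "\<bar>Im \<Xi>\<bar> + Re \<Xi> \<le> y" unfolding y_def using abs_Im_le_cmod[of \<Xi>] complex_Re_le_cmod[of \<Xi>] by simp
  have XYp: "\<bar>Im \<Xi>\<bar> + Re \<Xi> > 0" using \<Xi> by simp
  have "norm (GM M s w) \<le> exp (ln (hN (\<bar>Im \<Xi>\<bar> + Re \<Xi>)) / pi)"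
    unfolding nG using Re_schwarz_integral_ln_le[OF schwarz hN_mono hN_pos hN_le1 hN0]
    by (simp add: divide_right_mono)
  also have "\<dots> = hN (\<bar>Im \<Xi>\<bar> + Re \<Xi>) powr (1 / pi)"
    using hN_pos[OF XYp] by (simp add: powr_def)
  also have "\<dots> \<le> hN y powr (1 / pi)"
    using hN_pos[OF XYp] monoD[OF hN_mono XY] by (intro powr_mono2) auto
  also have "\<dots> \<le> (hM M (y powr (1 / s)) powr s) powr (1 / pi)"
  proof -
    have "(hN y powr (1 / s)) powr s \<le> hM M (y powr (1 / s)) powr s"
      unfolding hN_def using hN_pos[OF y] s by (intro powr_mono2 hM_powr_le[OF pos s y]) (auto simp: hN_def)
    then show ?thesis using hN_pos[OF y] s by (intro powr_mono2) (auto simp: powr_powr)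
  qed
  also have "\<dots> = hM M (2 powr (1 / s) * exp (Re w)) powr (s / pi)"
    using s by (simp add: powr_powr y_def ny powr_mult exp_powr_real)
  finally show "norm (GM M s w) \<le> hM M (2 powr (1 / s) * exp (Re w)) powr (s / pi)" .
qed

lemma eM_holomorphic:
  assumes sr: "strongly_regular M" and s: "s > 0" and sg: "1 < s * gammaM M"
  shows "eM M s holomorphic_on {w. \<bar>s * Im w\<bar> < pi / 2}"
proof -
  have "(\<lambda>w. GM M s (- w)) holomorphic_on {w. \<bar>s * Im w\<bar> < pi / 2}"
    by (rule holomorphic_on_compose_gen[OF _ GM_holomorphic[OF sr s sg], unfolded o_def])
       (auto intro!: holomorphic_intros)
  then show ?thesis unfolding eM_def[abs_def] by (auto intro!: holomorphic_intros)
qed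

lemma eM_bounds:
  assumes sr: "strongly_regular M" and s: "s > 0" and sg: "1 < s * gammaM M"
    and w: "\<bar>s * Im w\<bar> < pi / 2"
  shows "norm (eM M s w) \<le> exp (Re w)"
    and "norm (eM M s w) \<le> exp (Re w) * hM M (2 powr (1 / s) * exp (- Re w)) powr (s / pi)"
proof -
  have w': "\<bar>s * Im (- w)\<bar> < pi / 2" using w by simp
  have n: "norm (eM M s w) = exp (Re w) * norm (GM M s (- w))" by (simp add: eM_def norm_mult)
  show "norm (eM M s w) \<le> exp (Re w)" unfolding n using GM_bounds(1)[OF sr s sg w'] by simp
  show "norm (eM M s w) \<le> exp (Re w) * hM M (2 powr (1 / s) * exp (- Re w)) powr (s / pi)"
    unfolding n using GM_bounds(2)[OF sr s sg w'] by simp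
qed

section \<open>Integrability and holomorphy of the Laplace integral\<close>

lemma proper_subsector_mem:
  assumes "proper_subsector d' \<theta>2 d \<alpha>" "\<bar>Im v - d'\<bar> \<le> \<theta>' * pi / 2" "\<theta>' < \<theta>2"
  shows "v \<in> sector d \<alpha>" "v \<in> sector d' \<theta>2"
proof -
  have "\<theta>' * pi / 2 < \<theta>2 * pi / 2" using assms(3) by (simp add: divide_strict_right_mono)
  then have a: "\<bar>Im v - d'\<bar> < \<theta>2 * pi / 2" using assms(2) by linarith
  then show "v \<in> sector d' \<theta>2" by (simp add: sector_def)
  show "v \<in> sector d \<alpha>"
    using a assms(1) unfolding proper_subsector_def sector_def abs_less_iff by auto
qed

text \<open>Near the origin \<open>f\<close> is close to its limit there; the rest of a bounded closed subsector is
  a compact rectangle in logarithmic coordinates.\<close>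
lemma AM_bounded_near_origin:
  assumes f: "f \<in> AM M d \<alpha>" and ps: "proper_subsector d' \<theta>2 d \<alpha>" and th: "\<theta>' < \<theta>2" and r: "r > 0"
  shows "\<exists>B. \<forall>v. \<bar>Im v - d'\<bar> \<le> \<theta>' * pi / 2 \<and> exp (Re v) \<le> r \<longrightarrow> norm (f v) \<le> B"
proof -
  have hol: "f holomorphic_on sector d \<alpha>" and co: "cont_at_origin f d \<alpha>" using f by (auto simp: AM_def)
  obtain L where "\<forall>\<epsilon>>0. \<exists>\<eta>>0. \<forall>w\<in>bsector d' \<theta>2 r. exp (Re w) < \<eta> \<longrightarrow> cmod (f w - L) < \<epsilon>"
    using co ps r unfolding cont_at_origin_def by blast
  then obtain \<eta> where \<eta>: "\<eta> > 0" and near: "\<And>w. w \<in> bsector d' \<theta>2 r \<Longrightarrow> exp (Re w) < \<eta> \<Longrightarrow> cmod (f w - L) < 1"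
    by (meson zero_less_one)
  define \<eta>0 where "\<eta>0 = min \<eta> r"
  have \<eta>0: "\<eta>0 > 0" using \<eta> r by (simp add: \<eta>0_def)
  define K where "K = cbox (Complex (ln \<eta>0) (d' - \<theta>' * pi / 2)) (Complex (ln r) (d' + \<theta>' * pi / 2))"
  have K: "v \<in> K \<longleftrightarrow> ln \<eta>0 \<le> Re v \<and> Re v \<le> ln r \<and> \<bar>Im v - d'\<bar> \<le> \<theta>' * pi / 2" for v
    unfolding K_def cbox_complex_eq abs_le_iff by auto
  have KS: "K \<subseteq> sector d \<alpha>" using proper_subsector_mem(1)[OF ps _ th] K by blast
  have "compact K" unfolding K_def by (rule compact_cbox)
  then have "compact (f ` K)"
    by (rule compact_continuous_image[OF holomorphic_on_imp_continuous_on[OF holomorphic_on_subset[OF hol KS]]])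
  then obtain B1 where B1: "\<And>v. v \<in> K \<Longrightarrow> norm (f v) \<le> B1"
    using compact_imp_bounded bounded_iff by (metis imageI)
  show ?thesis
  proof (intro exI[of _ "max B1 (norm L + 1)"] allI impI)
    fix v assume v: "\<bar>Im v - d'\<bar> \<le> \<theta>' * pi / 2 \<and> exp (Re v) \<le> r"
    show "norm (f v) \<le> max B1 (norm L + 1)"
    proof (cases "exp (Re v) < \<eta>0")
      case True
      then have "v \<in> bsector d' \<theta>2 r"
        using proper_subsector_mem(2)[OF ps _ th, of v] v by (auto simp: bsector_def sector_def \<eta>0_def)
      then have "cmod (f v - L) < 1" using near True by (simp add: \<eta>0_def)
      then show ?thesis using norm_triangle_ineq2[of "f v" L] by simp
    next
      case False
      then have "\<eta>0 \<le> exp (Re v)" by simp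
      then have "ln \<eta>0 \<le> Re v" using \<eta>0 by (metis exp_gt_zero ln_exp ln_le_cancel_iff)
      moreover have "Re v \<le> ln r" using v r by (metis exp_le_cancel_iff exp_ln)
      ultimately have "v \<in> K" using v by (simp add: K)
      then show ?thesis using B1 by fastforce
    qed
  qed
qed

lemma le_inverse_one_plus_square:
  fixes x c t :: real
  assumes "0 \<le> x" "x \<le> 1" "x \<le> c / t\<^sup>2" "t > 0"
  shows "x \<le> 2 * (1 + c) / (1 + t\<^sup>2)"
proof (cases "t \<le> 1")
  case True
  have "c \<ge> 0" using assms zero_le_divide_iff[of c "t\<^sup>2"] by auto
  moreover have "t\<^sup>2 \<le> 1" using True assms(4) by (simp add: power_le_one)
  ultimately have "x * (1 + t\<^sup>2) \<le> 2 * (1 + c)"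
    using assms(1,2) mult_mono[of x 1 "1 + t\<^sup>2" 2] by simp
  then show ?thesis by (simp add: le_divide_eq add_pos_nonneg)
next
  case False
  then have "1 + t\<^sup>2 \<le> 2 * t\<^sup>2" by (simp add: one_le_power)
  then have "x * (1 + t\<^sup>2) \<le> 2 * (x * t\<^sup>2)"
    using mult_left_mono[OF _ assms(1)] by (simp add: mult.left_commute)
  moreover have "x * t\<^sup>2 \<le> c" using assms(3,4) by (simp add: le_divide_eq)
  ultimately have "x * (1 + t\<^sup>2) \<le> 2 * c" by linarith
  then show ?thesis using assms(1) by (simp add: le_divide_eq add_pos_nonneg)
qed

lemma hM_le_inverse_one_plus_square:
  assumes pos: "\<forall>p. M p > 0" and M0: "M 0 = 1" and u: "0 < u" "u \<le> c / t" and t: "t > 0"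
  shows "hM M u \<le> 2 * (1 + M 2 * c\<^sup>2) / (1 + t\<^sup>2)"
proof (rule le_inverse_one_plus_square[OF hM_nonneg[OF pos] hM_le_1[OF pos M0 u(1)] _ t])
  have "hM M u \<le> M 2 * u ^ 2" by (rule hM_le[OF pos u(1)])
  also have "\<dots> \<le> M 2 * (c / t) ^ 2" using pos u by (intro mult_left_mono power_mono) (auto intro: less_imp_le)
  finally show "hM M u \<le> M 2 * c\<^sup>2 / t\<^sup>2" by (simp add: power_divide)
qed

text \<open>Far from the origin the decay of \<open>e\<^sub>M\<close> beats the growth \<open>1 / h\<^sub>M\<close> of \<open>f\<close>: by \<open>(\<mu>)\<close>,
  \<open>h\<^sub>M(u / A\<^sup>k) \<le> h\<^sub>M(u)\<^bsup>2\<^sup>k\<^esup>\<close>, and \<open>k\<close> is chosen with \<open>2\<^sup>k s / \<pi> \<ge> 2\<close>.\<close>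
lemma norm_eM_le_hM_square:
  assumes sr: "strongly_regular M" and s: "s > 0" and sg: "1 < s * gammaM M"
    and A: "A \<ge> 1" and mu: "\<And>p l. M (p + l) \<le> A ^ (p + l) * M p * M l" and k: "2 \<le> 2 ^ k * s / pi"
    and \<zeta>: "\<bar>s * Im \<zeta>\<bar> < pi / 2" and u: "u > 0" and arg: "2 powr (1 / s) * exp (- Re \<zeta>) \<le> u / A ^ k"
  shows "norm (eM M s \<zeta>) \<le> exp (Re \<zeta>) * (hM M u)\<^sup>2"
proof -
  have pos: "\<forall>p. M p > 0" and M0: "M 0 = 1" using strongly_regularD[OF sr] by auto
  have hu: "0 < hM M u" "hM M u \<le> 1"
    using hM_pos_strongly_regular[OF sr s sg u] hM_le_1[OF pos M0 u] by auto
  have "hM M (2 powr (1 / s) * exp (- Re \<zeta>)) \<le> hM M (u / A ^ k)" by (rule hM_mono[OF pos arg])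
  also have "\<dots> \<le> hM M u ^ (2 ^ k)" by (rule hM_divide_power_le[OF pos M0 A mu u])
  finally have "hM M (2 powr (1 / s) * exp (- Re \<zeta>)) powr (s / pi) \<le> (hM M u ^ (2 ^ k)) powr (s / pi)"
    using hM_nonneg[OF pos] s by (intro powr_mono2) auto
  also have "\<dots> = hM M u powr (2 ^ k * s / pi)"
    using hu by (simp add: powr_realpow[symmetric] powr_powr)
  also have "\<dots> \<le> hM M u powr 2" using k hu by (intro powr_mono') auto
  also have "\<dots> = (hM M u)\<^sup>2" using hu by (simp add: powr_realpow)
  finally show ?thesis
    using eM_bounds(2)[OF sr s sg \<zeta>] by (smt (verit) exp_gt_zero mult_left_mono)
qed

lemma eM_times_near_bound:
  assumes sr: "strongly_regular M" and s: "s > 0" and sg: "1 < s * gammaM M"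
    and \<zeta>: "\<bar>s * Im \<zeta>\<bar> < pi / 2" and y: "norm y \<le> B" and t: "0 < t" "t \<le> c"
  shows "norm y * (norm (eM M s \<zeta>) / exp (Re \<zeta>)) \<le> B * (1 + c\<^sup>2) / (1 + t\<^sup>2)"
proof -
  have B: "B \<ge> 0" using y norm_ge_zero order_trans by blast
  have "norm y * (norm (eM M s \<zeta>) / exp (Re \<zeta>)) \<le> B * 1"
    using y eM_bounds(1)[OF sr s sg \<zeta>] B by (intro mult_mono) (auto simp: divide_le_eq)
  also have "\<dots> \<le> B * (1 + c\<^sup>2) / (1 + t\<^sup>2)"
  proof -
    have "1 + t\<^sup>2 \<le> 1 + c\<^sup>2" using t by (simp add: power_mono)
    then show ?thesis using B by (simp add: le_divide_eq mult_left_mono add_pos_nonneg)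
  qed
  finally show ?thesis .
qed

lemma eM_times_far_bound:
  assumes sr: "strongly_regular M" and s: "s > 0" and sg: "1 < s * gammaM M"
    and A: "A \<ge> 1" and mu: "\<And>p l. M (p + l) \<le> A ^ (p + l) * M p * M l" and k: "2 \<le> 2 ^ k * s / pi"
    and \<zeta>: "\<bar>s * Im \<zeta>\<bar> < pi / 2" and u: "0 < u" "u \<le> c / t" and t: "t > 0"
    and arg: "2 powr (1 / s) * exp (- Re \<zeta>) \<le> u / A ^ k" and y: "norm y \<le> k4 / hM M u"
  shows "norm y * (norm (eM M s \<zeta>) / exp (Re \<zeta>)) \<le> k4 * (2 * (1 + M 2 * c\<^sup>2)) / (1 + t\<^sup>2)"
proof -
  have pos: "\<forall>p. M p > 0" and M0: "M 0 = 1" using strongly_regularD[OF sr] by auto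
  have hu: "hM M u > 0" by (rule hM_pos_strongly_regular[OF sr s sg u(1)])
  have "0 \<le> k4 / hM M u" using y by (rule order_trans[OF norm_ge_zero])
  then have k4: "k4 \<ge> 0" using hu by (simp add: zero_le_divide_iff)
  have "norm (eM M s \<zeta>) / exp (Re \<zeta>) \<le> (hM M u)\<^sup>2"
    using norm_eM_le_hM_square[OF sr s sg A mu k \<zeta> u(1) arg] by (simp add: divide_le_eq mult.commute)
  then have "norm y * (norm (eM M s \<zeta>) / exp (Re \<zeta>)) \<le> k4 / hM M u * (hM M u)\<^sup>2"
    using y hu k4 by (intro mult_mono) auto
  also have "\<dots> = k4 * hM M u" using hu by (simp add: power2_eq_square)
  also have "\<dots> \<le> k4 * (2 * (1 + M 2 * c\<^sup>2) / (1 + t\<^sup>2))"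
    using hM_le_inverse_one_plus_square[OF pos M0 u t] k4 by (intro mult_left_mono) auto
  finally show ?thesis by simp
qed

text \<open>The integrand of \<open>LapM\<close> along the ray \<open>u = t e\<^sup>v\<close>: \<open>LapM M s f \<tau> = ray_integral M s f (\<i> \<tau>)\<close>.
  Allowing \<open>Re v \<noteq> 0\<close> only rescales the ray (\<open>ray_integral_shift_real\<close>); this is what makes
  the integral locally independent of the direction.\<close>
definition ray_integrand ::
    "(nat \<Rightarrow> real) \<Rightarrow> real \<Rightarrow> (complex \<Rightarrow> complex) \<Rightarrow> complex \<Rightarrow> complex \<Rightarrow> real \<Rightarrow> complex" where
  "ray_integrand M s f v w t =
     indicator {0<..} t *\<^sub>R (eM M s (complex_of_real (ln t) + v - w) * f (complex_of_real (ln t) + v) / complex_of_real t)"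

definition ray_integral :: "(nat \<Rightarrow> real) \<Rightarrow> real \<Rightarrow> (complex \<Rightarrow> complex) \<Rightarrow> complex \<Rightarrow> complex \<Rightarrow> complex" where
  "ray_integral M s f v w = (\<integral>t. ray_integrand M s f v w t \<partial>lborel)"

definition ray_admissible :: "real \<Rightarrow> real \<Rightarrow> real \<Rightarrow> real \<Rightarrow> complex \<Rightarrow> complex \<Rightarrow> bool" where
  "ray_admissible s d' \<theta> \<rho> v w \<longleftrightarrow>
     \<bar>Re v\<bar> \<le> 1 \<and> \<bar>Im v - d'\<bar> \<le> \<theta> * pi / 2 \<and> exp (Re w) < \<rho> \<and> \<bar>s * (Im v - Im w)\<bar> < pi / 2"

lemma LapM_eq_ray_integral: "LapM M s f \<tau> w = ray_integral M s f (\<i> * complex_of_real \<tau>) w"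
  unfolding LapM_def ray_integral_def ray_integrand_def lap_integrand_def set_lebesgue_integral_def ..

lemma set_integrable_lap_integrand_iff:
  "set_integrable lborel {0<..} (lap_integrand M s f \<tau> w) \<longleftrightarrow>
     integrable lborel (ray_integrand M s f (\<i> * complex_of_real \<tau>) w)"
  unfolding set_integrable_def ray_integrand_def lap_integrand_def ..

lemma ray_integrand_bound:
  assumes sr: "strongly_regular M" and s: "s > 0" and sg: "1 < s * gammaM M"
    and f: "f \<in> AM M d \<alpha>" and ps: "proper_subsector d' \<theta>2 d \<alpha>" and th: "\<theta>' < \<theta>2"
  shows "\<exists>\<rho>>0. \<forall>lo. \<exists>K. \<forall>v w t. ray_admissible s d' \<theta>' \<rho> v w \<and> lo \<le> Re w \<longrightarrow>
           norm (ray_integrand M s f v w t) \<le> K / (1 + t\<^sup>2)"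
proof -
  have pos: "\<forall>p. M p > 0" and M0: "M 0 = 1" using strongly_regularD[OF sr] by auto
  obtain A where A: "A \<ge> 1" and mu: "\<And>p l. M (p + l) \<le> A ^ (p + l) * M p * M l"
    using strongly_regularD(4)[OF sr] by blast
  obtain r k4 k5 where r: "r > 0" and k4: "k4 > 0" and k5: "k5 > 0"
    and f_far: "\<And>z. z \<in> sector d' \<theta>2 \<Longrightarrow> exp (Re z) \<ge> r \<Longrightarrow> cmod (f z) \<le> k4 / hM M (k5 / exp (Re z))"
    using f ps unfolding AM_def by blast
  obtain B0 where "\<And>z. \<bar>Im z - d'\<bar> \<le> \<theta>' * pi / 2 \<Longrightarrow> exp (Re z) \<le> r \<Longrightarrow> norm (f z) \<le> B0"
    using AM_bounded_near_origin[OF f ps th r] by blast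
  then obtain B where B: "B \<ge> 0" and f_near: "\<And>z. \<bar>Im z - d'\<bar> \<le> \<theta>' * pi / 2 \<Longrightarrow> exp (Re z) \<le> r \<Longrightarrow> norm (f z) \<le> B"
    by (metis max.cobounded2 max.coboundedI1)
  obtain k :: nat where "2 * pi / s < real k" using reals_Archimedean2 by blast
  moreover have "real k < 2 ^ k" by (rule of_nat_less_two_power)
  ultimately have "2 * pi / s < 2 ^ k" by linarith
  then have k: "2 \<le> 2 ^ k * s / pi" using s by (simp add: field_simps)
  define \<rho> where "\<rho> = k5 / (A ^ k * 2 powr (1 / s))"
  show ?thesis
  proof (rule exI[of _ \<rho>], intro conjI allI)
    show "\<rho> > 0" using k5 A by (simp add: \<rho>_def)
    fix lo :: real
    define E where "E = exp (1 - lo)"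
    define c where "c = k5 * exp 1"
    show "\<exists>K. \<forall>v w t. ray_admissible s d' \<theta>' \<rho> v w \<and> lo \<le> Re w \<longrightarrow>
            norm (ray_integrand M s f v w t) \<le> K / (1 + t\<^sup>2)"
    proof (intro exI allI impI)
      fix v w and t :: real
      assume "ray_admissible s d' \<theta>' \<rho> v w \<and> lo \<le> Re w"
      then have a: "\<bar>Re v\<bar> \<le> 1" and im: "\<bar>Im v - d'\<bar> \<le> \<theta>' * pi / 2" and lo: "lo \<le> Re w"
        and w\<rho>: "exp (Re w) < \<rho>" and sw: "\<bar>s * (Im v - Im w)\<bar> < pi / 2"
        unfolding ray_admissible_def by auto
      define z \<zeta> where "z = complex_of_real (ln t) + v" and "\<zeta> = complex_of_real (ln t) + v - w"
      have E: "exp (Re v - Re w) \<le> E" unfolding E_def using a lo by (simp add: abs_le_iff)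
      have E0: "E > 0" by (simp add: E_def)
      have p: "1 + t\<^sup>2 > 0" by (simp add: add_pos_nonneg)
      show "norm (ray_integrand M s f v w t) \<le> E * max (B * (1 + (r * exp 1)\<^sup>2)) (k4 * (2 * (1 + M 2 * c\<^sup>2))) / (1 + t\<^sup>2)"
      proof (cases "t > 0")
        case t: True
        have \<zeta>: "\<bar>s * Im \<zeta>\<bar> < pi / 2" using sw by (simp add: \<zeta>_def)
        have z: "exp (Re z) = t * exp (Re v)" using t by (simp add: z_def exp_add)
        have e\<zeta>: "exp (Re \<zeta>) = t * exp (Re v - Re w)" using t by (simp add: \<zeta>_def exp_add exp_diff)
        have n: "norm (ray_integrand M s f v w t) = exp (Re v - Re w) * (norm (f z) * (norm (eM M s \<zeta>) / exp (Re \<zeta>)))"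
          using t by (simp add: ray_integrand_def z_def \<zeta>_def[symmetric] e\<zeta> norm_mult norm_divide)
        have ev: "exp (- 1) \<le> exp (Re v)" using a by simp
        have "norm (f z) * (norm (eM M s \<zeta>) / exp (Re \<zeta>))
                \<le> max (B * (1 + (r * exp 1)\<^sup>2)) (k4 * (2 * (1 + M 2 * c\<^sup>2))) / (1 + t\<^sup>2)"
        proof (cases "exp (Re z) \<le> r")
          case True
          have "t * exp (- 1) \<le> r" using True z ev t by (smt (verit) mult_left_mono)
          then have "t \<le> r * exp 1" by (simp add: exp_minus field_simps)
          moreover have "norm (f z) \<le> B" using f_near[OF _ True] im by (simp add: z_def)
          ultimately have "norm (f z) * (norm (eM M s \<zeta>) / exp (Re \<zeta>)) \<le> B * (1 + (r * exp 1)\<^sup>2) / (1 + t\<^sup>2)"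
            using eM_times_near_bound[OF sr s sg \<zeta>] t by blast
          then show ?thesis using p by (elim order_trans) (simp add: divide_right_mono)
        next
          case False
          define u where "u = k5 / exp (Re z)"
          have u: "u > 0" "u \<le> c / t"
            using k5 t ev by (simp_all add: u_def z c_def exp_minus field_simps)
          have "2 powr (1 / s) * exp (Re w) \<le> k5 / A ^ k"
            using w\<rho> A by (simp add: \<rho>_def field_simps)
          then have arg: "2 powr (1 / s) * exp (- Re \<zeta>) \<le> u / A ^ k"
            using t by (simp add: u_def z e\<zeta> exp_diff exp_minus field_simps)
          have "z \<in> sector d' \<theta>2" using im proper_subsector_mem(2)[OF ps _ th] by (simp add: z_def)
          then have "norm (f z) \<le> k4 / hM M u" using f_far[of z] False by (simp add: u_def)
          then have "norm (f z) * (norm (eM M s \<zeta>) / exp (Re \<zeta>)) \<le> k4 * (2 * (1 + M 2 * c\<^sup>2)) / (1 + t\<^sup>2)"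
            by (rule eM_times_far_bound[OF sr s sg A mu k \<zeta> u t arg])
          then show ?thesis using p by (elim order_trans) (simp add: divide_right_mono)
        qed
        then show ?thesis
          unfolding n times_divide_eq_right[symmetric] using E E0 by (intro mult_mono) auto
      qed (use p B E0 in \<open>simp add: ray_integrand_def le_max_iff_disj\<close>)
    qed
  qed
qed

lemma integrable_const_div_one_plus_square: "integrable lborel (\<lambda>t::real. K / (1 + t\<^sup>2))"
  using integrable_mult_right[OF integrable_inverse_1_plus_square[unfolded set_integrable_def], of K]
  by (simp add: divide_inverse)

lemma ray_integrand_measurable:
  assumes sr: "strongly_regular M" and s: "s > 0" and sg: "1 < s * gammaM M"
    and f: "f \<in> AM M d \<alpha>" and v: "\<bar>Im v - d\<bar> < \<alpha> * pi / 2" and vw: "\<bar>s * (Im v - Im w)\<bar> < pi / 2"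
  shows "ray_integrand M s f v w \<in> borel_measurable lborel"
proof -
  have hol: "f holomorphic_on sector d \<alpha>" using f by (simp add: AM_def)
  have "continuous_on {0<..} (\<lambda>t::real. eM M s (complex_of_real (ln t) + v - w))"
    using vw by (intro continuous_on_compose2[OF holomorphic_on_imp_continuous_on[OF eM_holomorphic[OF sr s sg]]]
        continuous_intros) auto
  moreover have "continuous_on {0<..} (\<lambda>t::real. f (complex_of_real (ln t) + v))"
    using v by (intro continuous_on_compose2[OF holomorphic_on_imp_continuous_on[OF hol]] continuous_intros)
      (auto simp: sector_def)
  ultimately have "continuous_on {0<..} (\<lambda>t::real. eM M s (complex_of_real (ln t) + v - w) *
                     f (complex_of_real (ln t) + v) / complex_of_real t)"
    by (intro continuous_intros) auto
  then have "(\<lambda>t::real. indicator {0<..} t *\<^sub>R (eM M s (complex_of_real (ln t) + v - w) *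
               f (complex_of_real (ln t) + v) / complex_of_real t)) \<in> borel_measurable borel"
    by (intro borel_measurable_continuous_on_indicator) auto
  then show ?thesis unfolding ray_integrand_def[abs_def] by simp
qed

lemma ray_integral_shift_real: "ray_integral M s f (v + complex_of_real c) w = ray_integral M s f v w"
proof -
  have "ray_integral M s f v w = \<bar>exp c\<bar> *\<^sub>R (\<integral>t. ray_integrand M s f v w (0 + exp c * t) \<partial>lborel)"
    unfolding ray_integral_def by (rule lborel_integral_real_affine) simp
  also have "\<dots> = (\<integral>t. exp c *\<^sub>R ray_integrand M s f v w (exp c * t) \<partial>lborel)" by simp
  also have "\<dots> = ray_integral M s f (v + complex_of_real c) w"
    unfolding ray_integral_def
  proof (rule Bochner_Integration.integral_cong[OF refl])
    fix t :: real
    show "exp c *\<^sub>R ray_integrand M s f v w (exp c * t) = ray_integrand M s f (v + complex_of_real c) w t"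
    proof (cases "t > 0")
      case True
      then have "ln (exp c * t) = c + ln t" by (simp add: ln_mult)
      with True show ?thesis
        by (simp add: ray_integrand_def scaleR_conv_of_real algebra_simps)
    qed (simp add: ray_integrand_def zero_less_mult_iff)
  qed
  finally show ?thesis ..
qed

lemma DERIV_zero_if_real_shift_invariant:
  assumes "(F has_field_derivative D) (at z)" and "\<And>c. F (z + complex_of_real c) = F z"
  shows "D = 0"
proof -
  have "filterlim complex_of_real (at 0) (at (0::real))"
    by (intro filterlim_atI tendsto_eq_intros) (auto simp: eventually_at_filter)
  with assms(1) have "((\<lambda>c::real. (F (z + complex_of_real c) - F z) / complex_of_real c) \<longlongrightarrow> D) (at 0)"
    unfolding DERIV_def by (rule filterlim_compose[unfolded o_def])
  then have "((\<lambda>c::real. 0) \<longlongrightarrow> D) (at 0)" using assms(2) by simp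
  then show "D = 0" by (simp add: tendsto_const_iff)
qed

lemma abs_less_both_iff:
  fixes y c1 c2 a1 a2 :: real
  shows "\<bar>y - c1\<bar> < a1 \<and> \<bar>y - c2\<bar> < a2 \<longleftrightarrow> max (c1 - a1) (c2 - a2) < y \<and> y < min (c1 + a1) (c2 + a2)"
  by auto

context
  fixes M :: "nat \<Rightarrow> real" and s :: real and f :: "complex \<Rightarrow> complex"
    and d \<alpha> d' \<theta>2 \<theta>' \<rho> :: real
  assumes sr: "strongly_regular M" and s: "s > 0" and sg: "1 < s * gammaM M"
    and f: "f \<in> AM M d \<alpha>" and ps: "proper_subsector d' \<theta>2 d \<alpha>" and th: "\<theta>' < \<theta>2"
    and dom: "\<And>lo. \<exists>K. \<forall>v w t. ray_admissible s d' \<theta>' \<rho> v w \<and> lo \<le> Re w \<longrightarrow>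
                norm (ray_integrand M s f v w t) \<le> K / (1 + t\<^sup>2)"
begin

lemma ray_integrand_measurable_subsector:
  "\<bar>Im v - d'\<bar> \<le> \<theta>' * pi / 2 \<Longrightarrow> \<bar>s * (Im v - Im w)\<bar> < pi / 2 \<Longrightarrow>
     ray_integrand M s f v w \<in> borel_measurable lborel"
  using proper_subsector_mem(1)[OF ps _ th]
  by (intro ray_integrand_measurable[OF sr s sg f]) (auto simp: sector_def)

lemma integrable_ray_integrand:
  assumes "ray_admissible s d' \<theta>' \<rho> v w"
  shows "integrable lborel (ray_integrand M s f v w)"
proof -
  obtain K where K: "\<And>t. norm (ray_integrand M s f v w t) \<le> K / (1 + t\<^sup>2)"
    using dom[of "Re w"] assms by blast
  show ?thesis
  proof (rule Bochner_Integration.integrable_bound[OF integrable_const_div_one_plus_square[of K]])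
    show "ray_integrand M s f v w \<in> borel_measurable lborel"
      using assms by (intro ray_integrand_measurable_subsector) (auto simp: ray_admissible_def)
    show "AE t in lborel. norm (ray_integrand M s f v w t) \<le> norm (K / (1 + t\<^sup>2))"
      by (intro AE_I2 order_trans[OF K]) (auto intro!: divide_right_mono)
  qed
qed

lemma ray_integral_holomorphic:
  assumes v: "\<bar>Re v\<bar> \<le> 1" "\<bar>Im v - d'\<bar> \<le> \<theta>' * pi / 2"
  shows "ray_integral M s f v holomorphic_on {w. exp (Re w) < \<rho> \<and> \<bar>s * (Im v - Im w)\<bar> < pi / 2}"
    (is "_ holomorphic_on ?W")
  unfolding ray_integral_def[abs_def]
proof (rule holomorphic_on_lborel_integral)
  show "open ?W" by (intro open_Collect_conj open_Collect_less continuous_intros)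
  show "ray_integrand M s f v w \<in> borel_measurable lborel" if "w \<in> ?W" for w
    using that v by (intro ray_integrand_measurable_subsector) auto
  show "(\<lambda>w. ray_integrand M s f v w t) holomorphic_on ?W" for t
  proof (cases "t > 0")
    case True
    have "(\<lambda>w. eM M s (complex_of_real (ln t) + v - w)) holomorphic_on ?W"
      by (rule holomorphic_on_compose_gen[OF _ eM_holomorphic[OF sr s sg], unfolded o_def])
         (auto intro!: holomorphic_intros)
    then show ?thesis using True unfolding ray_integrand_def by (auto intro!: holomorphic_intros)
  qed (simp add: ray_integrand_def)
next
  fix w0 assume "w0 \<in> ?W"
  moreover have "open ?W" by (intro open_Collect_conj open_Collect_less continuous_intros)
  ultimately obtain r where r: "r > 0" "cball w0 r \<subseteq> ?W"
    using open_contains_cball[of ?W] by blast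
  obtain K where K: "\<And>w t. ray_admissible s d' \<theta>' \<rho> v w \<and> Re w0 - r \<le> Re w \<Longrightarrow>
                       norm (ray_integrand M s f v w t) \<le> K / (1 + t\<^sup>2)"
    using dom[of "Re w0 - r"] by blast
  have "Re w0 - r \<le> Re w" if "w \<in> cball w0 r" for w
    using that abs_Re_le_cmod[of "w - w0"] by (simp add: dist_norm norm_minus_commute)
  then show "\<exists>r>0. \<exists>g. cball w0 r \<subseteq> ?W \<and> integrable lborel g \<and>
               (\<forall>w\<in>cball w0 r. \<forall>t. norm (ray_integrand M s f v w t) \<le> g t)"
    using r v K integrable_const_div_one_plus_square[of K]
    by (intro exI[of _ r] exI[of _ "\<lambda>t. K / (1 + t\<^sup>2)"]) (auto simp: ray_admissible_def subset_iff)
qed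

lemma ray_integral_holomorphic_in_direction:
  assumes V: "open V" and adm: "\<And>v. v \<in> V \<Longrightarrow> ray_admissible s d' \<theta>' \<rho> v w"
  shows "(\<lambda>v. ray_integral M s f v w) holomorphic_on V"
  unfolding ray_integral_def
proof (rule holomorphic_on_lborel_integral[OF V])
  show "ray_integrand M s f v w \<in> borel_measurable lborel" if "v \<in> V" for v
    using adm[OF that] by (intro ray_integrand_measurable_subsector) (auto simp: ray_admissible_def)
  show "(\<lambda>v. ray_integrand M s f v w t) holomorphic_on V" for t
  proof (cases "t > 0")
    case True
    have "(\<lambda>v. eM M s (complex_of_real (ln t) + v - w)) holomorphic_on V"
      by (rule holomorphic_on_compose_gen[OF _ eM_holomorphic[OF sr s sg], unfolded o_def])
         (use adm in \<open>auto intro!: holomorphic_intros simp: ray_admissible_def\<close>)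
    moreover have "(\<lambda>v. f (complex_of_real (ln t) + v)) holomorphic_on V"
    proof (rule holomorphic_on_compose_gen[of _ _ f "sector d \<alpha>", unfolded o_def])
      show "f holomorphic_on sector d \<alpha>" using f by (simp add: AM_def)
      have "complex_of_real (ln t) + v \<in> sector d \<alpha>" if "v \<in> V" for v
        using adm[OF that] by (intro proper_subsector_mem(1)[OF ps _ th]) (simp add: ray_admissible_def)
      then show "(\<lambda>v. complex_of_real (ln t) + v) ` V \<subseteq> sector d \<alpha>" by blast
    qed (intro holomorphic_intros)
    ultimately show ?thesis using True unfolding ray_integrand_def by (auto intro!: holomorphic_intros)
  qed (simp add: ray_integrand_def)
next
  fix v0 assume "v0 \<in> V"
  then obtain r where r: "r > 0" "cball v0 r \<subseteq> V"
    using open_contains_cball[of V] V by blast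
  obtain K where K: "\<And>v t. ray_admissible s d' \<theta>' \<rho> v w \<and> Re w \<le> Re w \<Longrightarrow>
                       norm (ray_integrand M s f v w t) \<le> K / (1 + t\<^sup>2)"
    using dom[of "Re w"] by blast
  show "\<exists>r>0. \<exists>g. cball v0 r \<subseteq> V \<and> integrable lborel g \<and>
          (\<forall>v\<in>cball v0 r. \<forall>t. norm (ray_integrand M s f v w t) \<le> g t)"
    using r adm K integrable_const_div_one_plus_square[of K]
    by (intro exI[of _ r] exI[of _ "\<lambda>t. K / (1 + t\<^sup>2)"]) (auto simp: subset_iff)
qed

text \<open>On the strip of admissible \<open>v\<close> the integral is holomorphic in \<open>v\<close> and invariant under real
  shifts, hence has derivative zero.\<close>
lemma ray_integral_direction_independent:
  assumes w: "exp (Re w) < \<rho>" and y: "\<bar>y1 - d'\<bar> < \<theta>' * pi / 2" "\<bar>y2 - d'\<bar> < \<theta>' * pi / 2"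
    and sy: "\<bar>s * (y1 - Im w)\<bar> < pi / 2" "\<bar>s * (y2 - Im w)\<bar> < pi / 2"
  shows "ray_integral M s f (\<i> * complex_of_real y1) w = ray_integral M s f (\<i> * complex_of_real y2) w"
proof -
  define p q where "p = max (d' - \<theta>' * pi / 2) (Im w - pi / (2 * s))"
    and "q = min (d' + \<theta>' * pi / 2) (Im w + pi / (2 * s))"
  have sw: "\<bar>s * (y - Im w)\<bar> < pi / 2 \<longleftrightarrow> \<bar>y - Im w\<bar> < pi / (2 * s)" for y
  proof -
    have "\<bar>s * (y - Im w)\<bar> = s * \<bar>y - Im w\<bar>" using s by (simp add: abs_mult)
    then show ?thesis using s by (simp add: field_simps)
  qed
  have pq: "\<bar>y - d'\<bar> < \<theta>' * pi / 2 \<and> \<bar>s * (y - Im w)\<bar> < pi / 2 \<longleftrightarrow> p < y \<and> y < q" for y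
    unfolding sw p_def q_def by (rule abs_less_both_iff)
  define V where "V = {v. \<bar>Re v\<bar> < 1 \<and> p < Im v \<and> Im v < q}"
  have V_eq: "V = {v. Re v < 1} \<inter> {v. Re v > -1} \<inter> {v. Im v > p} \<inter> {v. Im v < q}"
    by (auto simp: V_def)
  have "open V" unfolding V_eq
    by (intro open_Int open_halfspace_Re_lt open_halfspace_Re_gt open_halfspace_Im_gt open_halfspace_Im_lt)
  have "convex V" unfolding V_eq
    by (intro convex_Int convex_halfspace_Re_lt convex_halfspace_Re_gt convex_halfspace_Im_gt convex_halfspace_Im_lt)
  have adm: "ray_admissible s d' \<theta>' \<rho> v w" if "v \<in> V" for v
  proof -
    have "\<bar>Im v - d'\<bar> < \<theta>' * pi / 2 \<and> \<bar>s * (Im v - Im w)\<bar> < pi / 2"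
      using that pq[of "Im v"] unfolding V_def by blast
    then show ?thesis using that w unfolding V_def ray_admissible_def by auto
  qed
  have "(\<lambda>v. ray_integral M s f v w) holomorphic_on V"
    by (rule ray_integral_holomorphic_in_direction[OF \<open>open V\<close> adm])
  then have D0: "((\<lambda>v. ray_integral M s f v w) has_field_derivative 0) (at z within V)" if "z \<in> V" for z
  proof -
    have D: "((\<lambda>v. ray_integral M s f v w) has_field_derivative deriv (\<lambda>v. ray_integral M s f v w) z) (at z)"
      using \<open>_ holomorphic_on V\<close> \<open>open V\<close> that by (rule holomorphic_derivI)
    have "deriv (\<lambda>v. ray_integral M s f v w) z = 0"
      using D by (rule DERIV_zero_if_real_shift_invariant) (rule ray_integral_shift_real)
    with has_field_derivative_at_within[OF D] show ?thesis by simp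
  qed
  obtain c where "\<And>v. v \<in> V \<Longrightarrow> ray_integral M s f v w = c"
    using has_field_derivative_zero_constant[OF \<open>convex V\<close> D0] by blast
  moreover have "p < y1 \<and> y1 < q" "p < y2 \<and> y2 < q"
    using pq[of y1] pq[of y2] y sy by blast+
  then have "\<i> * complex_of_real y1 \<in> V" "\<i> * complex_of_real y2 \<in> V"
    by (simp_all add: V_def)
  ultimately show ?thesis by simp
qed

end

section \<open>Gluing the Laplace transforms\<close>

lemma bsector_mem: "w \<in> bsector \<tau> \<delta> r \<longleftrightarrow> \<bar>Im w - \<tau>\<bar> < \<delta> * pi / 2 \<and> exp (Re w) < r"
  by (simp add: bsector_def)

lemma open_bsector: "open (bsector \<tau> \<delta> r)"
  unfolding bsector_def by (intro open_Collect_conj open_Collect_less continuous_intros)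

lemma convex_bsector:
  assumes "r > 0" shows "convex (bsector \<tau> \<delta> r)"
proof -
  have e: "exp x < r \<longleftrightarrow> x < ln r" for x using assms by (metis exp_less_cancel_iff exp_ln)
  have "bsector \<tau> \<delta> r = {w. Im w > \<tau> - \<delta> * pi / 2} \<inter> {w. Im w < \<tau> + \<delta> * pi / 2} \<inter> {w. Re w < ln r}"
    unfolding bsector_def e abs_less_iff by auto
  then show ?thesis
    by (simp add: convex_Int convex_halfspace_Re_lt convex_halfspace_Im_gt convex_halfspace_Im_lt)
qed

definition LapM_radius ::
    "(nat \<Rightarrow> real) \<Rightarrow> real \<Rightarrow> (complex \<Rightarrow> complex) \<Rightarrow> real \<Rightarrow> real \<Rightarrow> real \<Rightarrow> real \<Rightarrow> bool" where
  "LapM_radius M s f d \<delta> \<theta> r \<longleftrightarrow> r > 0 \<and>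
     (\<forall>\<tau>. \<bar>\<tau> - d\<bar> < \<theta> * pi / 2 \<longrightarrow>
        (\<forall>w\<in>bsector \<tau> \<delta> r. set_integrable lborel {0<..} (lap_integrand M s f \<tau> w)) \<and>
        LapM M s f \<tau> holomorphic_on bsector \<tau> \<delta> r \<and>
        (\<forall>\<tau>'. \<bar>\<tau>' - d\<bar> < \<theta> * pi / 2 \<longrightarrow>
           (\<forall>w\<in>bsector \<tau> \<delta> r \<inter> bsector \<tau>' \<delta> r. LapM M s f \<tau> w = LapM M s f \<tau>' w)))"

lemma LapM_radius_exists:
  assumes sr: "strongly_regular M" and s: "s > 0" and sg: "1 < s * gammaM M" and sd: "s * \<delta> < 1"
    and f: "f \<in> AM M d \<alpha>" and \<theta>: "0 < \<theta>" "\<theta> < \<alpha>"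
  shows "\<exists>r. LapM_radius M s f d \<delta> \<theta> r"
proof -
  have ps: "proper_subsector d ((\<theta> + \<alpha>) / 2) d \<alpha>" and th: "\<theta> < (\<theta> + \<alpha>) / 2"
    using \<theta> by (auto simp: proper_subsector_def field_simps)
  obtain \<rho> where \<rho>: "\<rho> > 0"
    and dom: "\<And>lo. \<exists>K. \<forall>v w t. ray_admissible s d \<theta> \<rho> v w \<and> lo \<le> Re w \<longrightarrow>
                       norm (ray_integrand M s f v w t) \<le> K / (1 + t\<^sup>2)"
    using ray_integrand_bound[OF sr s sg f ps th] by blast
  have angle: "\<bar>s * (\<tau> - Im w)\<bar> < pi / 2" if "\<bar>Im w - \<tau>\<bar> < \<delta> * pi / 2" for \<tau> w
  proof -
    have "\<bar>s * (\<tau> - Im w)\<bar> = s * \<bar>Im w - \<tau>\<bar>" using s by (simp add: abs_mult abs_minus_commute)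
    also have "\<dots> \<le> s * (\<delta> * pi / 2)" using that s by (intro mult_left_mono) auto
    also have "\<dots> < pi / 2" using sd by (simp add: mult.assoc[symmetric] mult_strict_right_mono)
    finally show ?thesis .
  qed
  have adm: "ray_admissible s d \<theta> \<rho> (\<i> * complex_of_real \<tau>) w"
    if "\<bar>\<tau> - d\<bar> < \<theta> * pi / 2" "w \<in> bsector \<tau> \<delta> \<rho>" for \<tau> w
    using that angle[of w \<tau>] by (simp add: ray_admissible_def bsector_mem)
  have "LapM_radius M s f d \<delta> \<theta> \<rho>"
    unfolding LapM_radius_def
  proof (intro conjI allI impI ballI \<rho>)
    fix \<tau> assume \<tau>: "\<bar>\<tau> - d\<bar> < \<theta> * pi / 2"
    show "set_integrable lborel {0<..} (lap_integrand M s f \<tau> w)" if "w \<in> bsector \<tau> \<delta> \<rho>" for w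
      unfolding set_integrable_lap_integrand_iff
      by (rule integrable_ray_integrand[OF sr s sg f ps th dom adm[OF \<tau> that]])
    have "ray_integral M s f (\<i> * complex_of_real \<tau>) holomorphic_on
            {w. exp (Re w) < \<rho> \<and> \<bar>s * (Im (\<i> * complex_of_real \<tau>) - Im w)\<bar> < pi / 2}"
      using \<tau> by (intro ray_integral_holomorphic[OF sr s sg f ps th dom]) auto
    then show "LapM M s f \<tau> holomorphic_on bsector \<tau> \<delta> \<rho>"
      unfolding LapM_eq_ray_integral[abs_def]
      by (rule holomorphic_on_subset) (use angle[of _ \<tau>] in \<open>auto simp only: bsector_mem mem_Collect_eq subset_iff Im_i_times Re_complex_of_real\<close>)
    fix \<tau>' w assume \<tau>': "\<bar>\<tau>' - d\<bar> < \<theta> * pi / 2" and "w \<in> bsector \<tau> \<delta> \<rho> \<inter> bsector \<tau>' \<delta> \<rho>"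
    then show "LapM M s f \<tau> w = LapM M s f \<tau>' w"
      unfolding LapM_eq_ray_integral using \<tau> angle
      by (intro ray_integral_direction_independent[OF sr s sg f ps th dom]) (auto simp: bsector_mem)
  qed
  then show ?thesis ..
qed

lemma LapM_radius_mono:
  assumes "LapM_radius M s f d \<delta> \<theta> r" "\<theta>' \<le> \<theta>" "0 < r'" "r' \<le> r"
  shows "LapM_radius M s f d \<delta> \<theta>' r'"
proof -
  have sub: "bsector \<tau> \<delta> r' \<subseteq> bsector \<tau> \<delta> r" for \<tau> using assms(4) by (auto simp: bsector_mem)
  have "\<theta>' * pi / 2 \<le> \<theta> * pi / 2" using assms(2) by (simp add: divide_right_mono)
  with assms(1,3) sub show ?thesis
    unfolding LapM_radius_def by (meson holomorphic_on_subset order_less_le_trans subsetD IntI IntD1 IntD2)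
qed

lemma exhaustion_radius:
  fixes \<theta> \<rho>s :: "nat \<Rightarrow> real" and a :: real
  assumes mono: "mono \<theta>" and pos: "\<And>n. \<rho>s n > 0" and exh: "\<And>x. x < a \<Longrightarrow> \<exists>n. x < \<theta> n"
  obtains \<rho> :: "real \<Rightarrow> real" and N :: "real \<Rightarrow> nat" where
    "\<And>x. \<rho> x > 0" "\<And>x. x < a \<Longrightarrow> x < \<theta> (N x)" "\<And>x n. n \<le> N x \<Longrightarrow> \<rho> x \<le> \<rho>s n"
    "\<And>x y. y < a \<Longrightarrow> x \<le> y \<Longrightarrow> \<rho> y \<le> \<rho> x" "\<And>b. b < a \<Longrightarrow> \<exists>r>0. \<forall>x\<le>b. r \<le> \<rho> x"
proof -
  define N where "N x = (LEAST n. x < \<theta> n)" for x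
  define \<rho> where "\<rho> x = Min (\<rho>s ` {..N x})" for x
  have N: "x < \<theta> (N x)" if "x < a" for x
    unfolding N_def using exh[OF that] by (rule LeastI_ex)
  have N_le: "N x \<le> n" if "x < \<theta> n" for x n
    unfolding N_def using that by (rule Least_le)
  have "\<rho> x > 0" for x using pos by (simp add: \<rho>_def Min_gr_iff)
  moreover have "\<rho> x \<le> \<rho>s n" if "n \<le> N x" for x n using that by (simp add: \<rho>_def)
  moreover have "\<rho> y \<le> \<rho> x" if "y < a" "x \<le> y" for x y
    unfolding \<rho>_def using that N[of y] N_le[of x "N y"] by (intro Min_antimono) auto
  moreover have "\<exists>r>0. \<forall>x\<le>b. r \<le> \<rho> x" if b: "b < a" for b
  proof -
    obtain n0 where n0: "b < \<theta> n0" using exh[OF b] by blast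
    have Nn0: "N x \<le> n0" if "x \<le> b" for x using that n0 by (intro N_le) simp
    have "Min (\<rho>s ` {..n0}) \<le> \<rho> x" if "x \<le> b" for x
      unfolding \<rho>_def using Nn0[OF that] by (intro Min_antimono) auto
    then show ?thesis using pos by (intro exI[of _ "Min (\<rho>s ` {..n0})"]) (auto simp: Min_gr_iff)
  qed
  ultimately show thesis using N by (intro that[of \<rho> N])
qed

lemma holomorphic_on_glue:
  assumes U: "\<And>i. i \<in> I \<Longrightarrow> open (U i)" and hol: "\<And>i. i \<in> I \<Longrightarrow> g i holomorphic_on U i"
    and agree: "\<And>i j z. i \<in> I \<Longrightarrow> j \<in> I \<Longrightarrow> z \<in> U i \<Longrightarrow> z \<in> U j \<Longrightarrow> g i z = g j z"
  obtains F where "\<And>i z. i \<in> I \<Longrightarrow> z \<in> U i \<Longrightarrow> F z = g i z" "F holomorphic_on (\<Union>i\<in>I. U i)"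
proof -
  define F where "F z = g (SOME i. i \<in> I \<and> z \<in> U i) z" for z
  have F: "F z = g i z" if "i \<in> I" "z \<in> U i" for i z
  proof -
    have "(SOME i. i \<in> I \<and> z \<in> U i) \<in> I \<and> z \<in> U (SOME i. i \<in> I \<and> z \<in> U i)"
      using that by (intro someI[of "\<lambda>i. i \<in> I \<and> z \<in> U i" i]) simp
    then show ?thesis unfolding F_def using that by (intro agree) auto
  qed
  have "open (\<Union>i\<in>I. U i)" using U by blast
  have "F holomorphic_on (\<Union>i\<in>I. U i)"
    unfolding holomorphic_on_open[OF \<open>open (\<Union>i\<in>I. U i)\<close>]
  proof
    fix z assume "z \<in> (\<Union>i\<in>I. U i)"
    then obtain i where i: "i \<in> I" "z \<in> U i" by blast
    then obtain D where D: "(g i has_field_derivative D) (at z)"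
      using hol[OF i(1)] unfolding holomorphic_on_open[OF U[OF i(1)]] by blast
    have "(F has_field_derivative D) (at z)"
      by (rule has_field_derivative_transform_within_open[OF D U[OF i(1)] i(2)]) (simp add: F[OF i(1)])
    then show "\<exists>D. (F has_field_derivative D) (at z)" ..
  qed
  with F show thesis by (intro that[of F])
qed

context
  fixes d \<alpha> \<delta> :: real and \<rho> :: "real \<Rightarrow> real"
  assumes \<alpha>: "\<alpha> > 0" and \<delta>: "\<delta> > 0" and \<rho>: "\<And>\<tau>. \<rho> \<tau> > 0"
    and anti: "\<And>\<tau> \<tau>'. \<bar>\<tau>' - d\<bar> < \<alpha> * pi / 2 \<Longrightarrow> \<bar>\<tau> - d\<bar> \<le> \<bar>\<tau>' - d\<bar> \<Longrightarrow> \<rho> \<tau>' \<le> \<rho> \<tau>"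
    and low: "\<And>b. b < \<alpha> \<Longrightarrow> \<exists>r>0. \<forall>\<tau>. \<bar>\<tau> - d\<bar> \<le> b * pi / 2 \<longrightarrow> r \<le> \<rho> \<tau>"
begin

lemma Union_bsector_subset_sector:
  "(\<Union>\<tau>\<in>{\<tau>. \<bar>\<tau> - d\<bar> < \<alpha> * pi / 2}. bsector \<tau> \<delta> (\<rho> \<tau>)) \<subseteq> sector d (\<alpha> + \<delta>)"
proof safe
  fix \<tau> w assume \<tau>: "\<bar>\<tau> - d\<bar> < \<alpha> * pi / 2" and w: "w \<in> bsector \<tau> \<delta> (\<rho> \<tau>)"
  have "\<bar>Im w - d\<bar> \<le> \<bar>Im w - \<tau>\<bar> + \<bar>\<tau> - d\<bar>" by linarith
  also have "\<dots> < \<delta> * pi / 2 + \<alpha> * pi / 2" using \<tau> w by (intro add_strict_mono) (auto simp: bsector_mem)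
  finally show "w \<in> sector d (\<alpha> + \<delta>)" by (simp add: sector_def field_simps)
qed

text \<open>A point of \<open>bsector d \<beta> r\<close> lies in the \<open>bsector\<close> of the direction obtained by clamping its
  argument to \<open>[d - c, d + c]\<close>, with \<open>\<beta> - \<delta> < 2 c / \<pi> < \<alpha>\<close>.\<close>
lemma bsector_subset_Union_bsector:
  assumes \<beta>: "0 < \<beta>" "\<beta> < \<alpha> + \<delta>"
  shows "\<exists>r>0. bsector d \<beta> r \<subseteq> (\<Union>\<tau>\<in>{\<tau>. \<bar>\<tau> - d\<bar> < \<alpha> * pi / 2}. bsector \<tau> \<delta> (\<rho> \<tau>))"
proof -
  define b where "b = (max (\<beta> - \<delta>) 0 + \<alpha>) / 2"
  define c where "c = b * pi / 2"
  have b: "0 < b" "b < \<alpha>" "\<beta> - \<delta> < b" using \<beta> \<alpha> by (auto simp: b_def max_def)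
  then have c: "0 < c" "c < \<alpha> * pi / 2" "(\<beta> - \<delta>) * pi / 2 < c"
    by (simp_all add: c_def divide_strict_right_mono)
  obtain r where r: "r > 0" and r_le: "\<And>\<tau>. \<bar>\<tau> - d\<bar> \<le> c \<Longrightarrow> r \<le> \<rho> \<tau>"
    using low[OF b(2)] unfolding c_def by blast
  show ?thesis
  proof (intro exI[of _ r] conjI subsetI r)
    fix w assume w: "w \<in> bsector d \<beta> r"
    define \<tau> where "\<tau> = d + max (- c) (min c (Im w - d))"
    have "\<bar>\<tau> - d\<bar> \<le> c" using c by (simp add: \<tau>_def)
    moreover have "\<bar>Im w - \<tau>\<bar> < \<delta> * pi / 2"
    proof -
      have x: "\<bar>Im w - d\<bar> < \<beta> * pi / 2" using w by (simp add: bsector_mem)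
      have c': "\<beta> * pi / 2 - \<delta> * pi / 2 < c" "0 < \<delta> * pi / 2" using c(3) \<delta> by (simp_all add: left_diff_distrib)
      consider "Im w - d < - c" | "c < Im w - d" | "- c \<le> Im w - d" "Im w - d \<le> c" by linarith
      then show ?thesis
        by cases (use x c' c(1) in \<open>simp_all add: \<tau>_def abs_less_iff\<close>)
    qed
    ultimately have "w \<in> bsector \<tau> \<delta> (\<rho> \<tau>)" "\<bar>\<tau> - d\<bar> < \<alpha> * pi / 2"
      using w r_le[of \<tau>] c by (auto simp: bsector_mem)
    then show "w \<in> (\<Union>\<tau>\<in>{\<tau>. \<bar>\<tau> - d\<bar> < \<alpha> * pi / 2}. bsector \<tau> \<delta> (\<rho> \<tau>))" by blast
  qed
qed

text \<open>Each \<open>bsector \<tau> \<delta> (\<rho> \<tau>)\<close> is joined to \<open>bsector d \<delta> (\<rho> d)\<close> by a vertical segment at height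
  \<open>ln (\<rho> \<tau>) - 1\<close>, which stays in the union because \<open>\<rho>\<close> decreases away from \<open>d\<close>.\<close>
lemma connected_Union_bsector:
  "connected (\<Union>\<tau>\<in>{\<tau>. \<bar>\<tau> - d\<bar> < \<alpha> * pi / 2}. bsector \<tau> \<delta> (\<rho> \<tau>))" (is "connected (\<Union>\<tau>\<in>?T. _)")
proof -
  define U where "U = (\<Union>\<tau>\<in>?T. bsector \<tau> \<delta> (\<rho> \<tau>))"
  define x0 where "x0 \<tau> = ln (\<rho> \<tau>) - 1" for \<tau>
  define seg where "seg \<tau> = closed_segment (Complex (x0 \<tau>) \<tau>) (Complex (x0 \<tau>) d)" for \<tau>
  have x0: "exp (x0 \<tau>) < \<rho> \<tau>" for \<tau> using \<rho>[of \<tau>] by (simp add: x0_def exp_diff divide_less_eq)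
  have dT: "d \<in> ?T" using \<alpha> by simp
  have seg_U: "seg \<tau> \<subseteq> U" if \<tau>: "\<tau> \<in> ?T" for \<tau>
  proof
    fix z assume "z \<in> seg \<tau>"
    then obtain u where u: "0 \<le> u" "u \<le> 1" and z: "z = (1 - u) *\<^sub>R Complex (x0 \<tau>) \<tau> + u *\<^sub>R Complex (x0 \<tau>) d"
      unfolding seg_def closed_segment_def by blast
    have "Im z - d = (1 - u) * (\<tau> - d)" unfolding z by (simp add: algebra_simps)
    then have "\<bar>Im z - d\<bar> = (1 - u) * \<bar>\<tau> - d\<bar>" using u by (simp add: abs_mult)
    also have "\<dots> \<le> \<bar>\<tau> - d\<bar>" using u by (simp add: mult_left_le_one_le)
    finally have zd: "\<bar>Im z - d\<bar> \<le> \<bar>\<tau> - d\<bar>" .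
    have "exp (Re z) < \<rho> (Im z)" using x0[of \<tau>] anti[OF _ zd] \<tau> unfolding z by (simp add: algebra_simps)
    then have "z \<in> bsector (Im z) \<delta> (\<rho> (Im z))" using \<delta> by (simp add: bsector_mem)
    moreover have "Im z \<in> ?T" using zd \<tau> by simp
    ultimately show "z \<in> U" unfolding U_def by blast
  qed
  have "connected (bsector \<tau> \<delta> (\<rho> \<tau>) \<union> seg \<tau> \<union> bsector d \<delta> (\<rho> d))" if "\<tau> \<in> ?T" for \<tau>
  proof (intro connected_Un convex_connected convex_bsector \<rho>)
    have "Complex (x0 \<tau>) \<tau> \<in> bsector \<tau> \<delta> (\<rho> \<tau>)" "Complex (x0 \<tau>) \<tau> \<in> seg \<tau>"
      using x0[of \<tau>] \<delta> by (simp_all add: seg_def bsector_mem)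
    then show "bsector \<tau> \<delta> (\<rho> \<tau>) \<inter> seg \<tau> \<noteq> {}" by blast
    have "\<rho> \<tau> \<le> \<rho> d" using that by (intro anti) auto
    then have "Complex (x0 \<tau>) d \<in> bsector d \<delta> (\<rho> d)" "Complex (x0 \<tau>) d \<in> seg \<tau>"
      using order_less_le_trans[OF x0[of \<tau>]] \<delta> by (simp_all add: seg_def bsector_mem)
    then show "(bsector \<tau> \<delta> (\<rho> \<tau>) \<union> seg \<tau>) \<inter> bsector d \<delta> (\<rho> d) \<noteq> {}" by blast
  qed (simp_all add: seg_def)
  moreover have "Complex (x0 d) d \<in> (\<Inter>\<tau>\<in>?T. bsector \<tau> \<delta> (\<rho> \<tau>) \<union> seg \<tau> \<union> bsector d \<delta> (\<rho> d))"
    using x0[of d] \<delta> by (simp add: bsector_mem)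
  ultimately have "connected (\<Union>\<tau>\<in>?T. bsector \<tau> \<delta> (\<rho> \<tau>) \<union> seg \<tau> \<union> bsector d \<delta> (\<rho> d))"
    by (intro connected_Union) auto
  moreover have "(\<Union>\<tau>\<in>?T. bsector \<tau> \<delta> (\<rho> \<tau>) \<union> seg \<tau> \<union> bsector d \<delta> (\<rho> d)) = U"
    using seg_U dT unfolding U_def by blast
  ultimately show ?thesis unfolding U_def by simp
qed

lemma sectorial_region_Union_bsector:
  "sectorial_region (\<Union>\<tau>\<in>{\<tau>. \<bar>\<tau> - d\<bar> < \<alpha> * pi / 2}. bsector \<tau> \<delta> (\<rho> \<tau>)) d (\<alpha> + \<delta>)"
proof -
  have "Complex (ln (\<rho> d) - 1) d \<in> bsector d \<delta> (\<rho> d)"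
    using \<rho>[of d] \<delta> by (simp add: bsector_mem exp_diff divide_less_eq)
  moreover have "d \<in> {\<tau>. \<bar>\<tau> - d\<bar> < \<alpha> * pi / 2}" using \<alpha> by simp
  ultimately have "(\<Union>\<tau>\<in>{\<tau>. \<bar>\<tau> - d\<bar> < \<alpha> * pi / 2}. bsector \<tau> \<delta> (\<rho> \<tau>)) \<noteq> {}" by blast
  then show ?thesis
    unfolding sectorial_region_def
    using Union_bsector_subset_sector connected_Union_bsector bsector_subset_Union_bsector
    by (auto intro!: open_UN open_bsector)
qed

end

lemma LapM_radius_function:
  assumes sr: "strongly_regular M" and s: "s > 0" and sg: "1 < s * gammaM M" and sd: "s * \<delta> < 1"
    and f: "f \<in> AM M d \<alpha>" and \<alpha>: "\<alpha> > 0"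
  obtains \<rho> :: "real \<Rightarrow> real" where "\<And>x. \<rho> x > 0"
    "\<And>x y. y < \<alpha> * pi / 2 \<Longrightarrow> x \<le> y \<Longrightarrow> \<rho> y \<le> \<rho> x"
    "\<And>b. b < \<alpha> * pi / 2 \<Longrightarrow> \<exists>r>0. \<forall>x\<le>b. r \<le> \<rho> x"
    "\<And>x y. x < \<alpha> * pi / 2 \<Longrightarrow> y < \<alpha> * pi / 2 \<Longrightarrow>
       \<exists>\<theta>. x < \<theta> * pi / 2 \<and> y < \<theta> * pi / 2 \<and> LapM_radius M s f d \<delta> \<theta> (min (\<rho> x) (\<rho> y))"
proof -
  define \<theta> where "\<theta> n = \<alpha> * (1 - 1 / (real n + 2))" for n
  have \<theta>: "0 < \<theta> n" "\<theta> n < \<alpha>" for n using \<alpha> by (simp_all add: \<theta>_def field_simps add_pos_nonneg)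
  have \<theta>_mono: "\<theta> n * pi / 2 \<le> \<theta> m * pi / 2" if "n \<le> m" for n m
    unfolding \<theta>_def using that \<alpha> by (intro divide_right_mono mult_right_mono mult_left_mono diff_left_mono divide_left_mono) auto
  have "\<exists>r. LapM_radius M s f d \<delta> (\<theta> n) r" for n by (rule LapM_radius_exists[OF sr s sg sd f \<theta>])
  then obtain \<rho>s where \<rho>s: "\<And>n. LapM_radius M s f d \<delta> (\<theta> n) (\<rho>s n)" by metis
  obtain \<rho> N where \<rho>: "\<And>x. \<rho> x > 0" and N: "\<And>x. x < \<alpha> * pi / 2 \<Longrightarrow> x < \<theta> (N x) * pi / 2"
    and \<rho>_le: "\<And>x n. n \<le> N x \<Longrightarrow> \<rho> x \<le> \<rho>s n"
    and anti: "\<And>x y. y < \<alpha> * pi / 2 \<Longrightarrow> x \<le> y \<Longrightarrow> \<rho> y \<le> \<rho> x"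
    and low: "\<And>b. b < \<alpha> * pi / 2 \<Longrightarrow> \<exists>r>0. \<forall>x\<le>b. r \<le> \<rho> x"
  proof (rule exhaustion_radius[of "\<lambda>n. \<theta> n * pi / 2" \<rho>s "\<alpha> * pi / 2"])
    show "mono (\<lambda>n. \<theta> n * pi / 2)" by (intro monoI \<theta>_mono)
    show "\<rho>s n > 0" for n using \<rho>s[of n] by (simp add: LapM_radius_def)
    show "\<exists>n. x < \<theta> n * pi / 2" if "x < \<alpha> * pi / 2" for x
    proof -
      obtain n :: nat where "\<alpha> / (\<alpha> - x / (pi / 2)) < n"
        using reals_Archimedean2 by blast
      then show ?thesis using that \<alpha> by (intro exI[of _ n]) (simp add: \<theta>_def field_simps)
    qed
  qed (rule that)
  have "\<exists>\<theta>. x < \<theta> * pi / 2 \<and> y < \<theta> * pi / 2 \<and> LapM_radius M s f d \<delta> \<theta> (min (\<rho> x) (\<rho> y))"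
    if "x < \<alpha> * pi / 2" "y < \<alpha> * pi / 2" for x y
  proof (intro exI conjI)
    define n where "n = max (N x) (N y)"
    show "x < \<theta> n * pi / 2" "y < \<theta> n * pi / 2"
      using order_less_le_trans[OF N \<theta>_mono] that by (simp_all add: n_def)
    have "min (\<rho> x) (\<rho> y) \<le> \<rho>s n" using \<rho>_le by (simp add: n_def max_def min_le_iff_disj)
    then show "LapM_radius M s f d \<delta> (\<theta> n) (min (\<rho> x) (\<rho> y))"
      using \<rho> by (intro LapM_radius_mono[OF \<rho>s order_refl]) auto
  qed
  with \<rho> anti low show thesis by (rule that)
qed

lemma LapM_glue:
  fixes \<rho> :: "real \<Rightarrow> real" and d \<alpha> :: real
  defines "T \<equiv> {\<tau>. \<bar>\<tau> - d\<bar> < \<alpha> * pi / 2}"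
  assumes common: "\<And>x y. x < \<alpha> * pi / 2 \<Longrightarrow> y < \<alpha> * pi / 2 \<Longrightarrow>
       \<exists>\<theta>. x < \<theta> * pi / 2 \<and> y < \<theta> * pi / 2 \<and> LapM_radius M s f d \<delta> \<theta> (min (\<rho> x) (\<rho> y))"
  obtains F where
    "\<And>\<tau>. \<tau> \<in> T \<Longrightarrow> (\<forall>w\<in>bsector \<tau> \<delta> (\<rho> \<bar>\<tau> - d\<bar>). set_integrable lborel {0<..} (lap_integrand M s f \<tau> w)) \<and>
       LapM M s f \<tau> holomorphic_on bsector \<tau> \<delta> (\<rho> \<bar>\<tau> - d\<bar>)"
    "\<And>\<tau> w. \<tau> \<in> T \<Longrightarrow> w \<in> bsector \<tau> \<delta> (\<rho> \<bar>\<tau> - d\<bar>) \<Longrightarrow> F w = LapM M s f \<tau> w"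
    "F holomorphic_on (\<Union>\<tau>\<in>T. bsector \<tau> \<delta> (\<rho> \<bar>\<tau> - d\<bar>))"
proof -
  have loc: "(\<forall>w\<in>bsector \<tau> \<delta> (\<rho> \<bar>\<tau> - d\<bar>). set_integrable lborel {0<..} (lap_integrand M s f \<tau> w)) \<and>
             LapM M s f \<tau> holomorphic_on bsector \<tau> \<delta> (\<rho> \<bar>\<tau> - d\<bar>)" if \<tau>: "\<tau> \<in> T" for \<tau>
  proof -
    obtain \<theta> where "\<bar>\<tau> - d\<bar> < \<theta> * pi / 2" "LapM_radius M s f d \<delta> \<theta> (\<rho> \<bar>\<tau> - d\<bar>)"
      using common[of "\<bar>\<tau> - d\<bar>" "\<bar>\<tau> - d\<bar>"] \<tau> unfolding T_def by auto
    then show ?thesis unfolding LapM_radius_def by blast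
  qed
  have agree: "LapM M s f \<tau>1 w = LapM M s f \<tau>2 w"
    if \<tau>: "\<tau>1 \<in> T" "\<tau>2 \<in> T" and w: "w \<in> bsector \<tau>1 \<delta> (\<rho> \<bar>\<tau>1 - d\<bar>)" "w \<in> bsector \<tau>2 \<delta> (\<rho> \<bar>\<tau>2 - d\<bar>)" for \<tau>1 \<tau>2 w
  proof -
    obtain \<theta> where "\<bar>\<tau>1 - d\<bar> < \<theta> * pi / 2" "\<bar>\<tau>2 - d\<bar> < \<theta> * pi / 2"
      and "LapM_radius M s f d \<delta> \<theta> (min (\<rho> \<bar>\<tau>1 - d\<bar>) (\<rho> \<bar>\<tau>2 - d\<bar>))"
      using common \<tau> unfolding T_def by blast
    moreover have "w \<in> bsector \<tau>1 \<delta> (min (\<rho> \<bar>\<tau>1 - d\<bar>) (\<rho> \<bar>\<tau>2 - d\<bar>))"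
      "w \<in> bsector \<tau>2 \<delta> (min (\<rho> \<bar>\<tau>1 - d\<bar>) (\<rho> \<bar>\<tau>2 - d\<bar>))"
      using w by (simp_all add: bsector_mem)
    ultimately show ?thesis unfolding LapM_radius_def by blast
  qed
  obtain F where F: "\<And>\<tau> w. \<tau> \<in> T \<Longrightarrow> w \<in> bsector \<tau> \<delta> (\<rho> \<bar>\<tau> - d\<bar>) \<Longrightarrow> F w = LapM M s f \<tau> w"
    and F_hol: "F holomorphic_on (\<Union>\<tau>\<in>T. bsector \<tau> \<delta> (\<rho> \<bar>\<tau> - d\<bar>))"
    using holomorphic_on_glue[of T "\<lambda>\<tau>. bsector \<tau> \<delta> (\<rho> \<bar>\<tau> - d\<bar>)" "LapM M s f", OF open_bsector _ agree] loc
    by blast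
  with loc show thesis by (rule that)
qed

theorem mainTheorem6:
  fixes M :: "nat \<Rightarrow> real" and d \<alpha> \<delta> \<delta>1 s :: real and f :: "complex \<Rightarrow> complex"
  assumes "strongly_regular M"
    and "\<alpha> > 0"
    and "f \<in> AM M d \<alpha>"
    and "0 < \<delta>" and "\<delta> < \<delta>1" and "\<delta>1 < gammaM M"
    and "s * \<delta>1 < 1" and "1 < s * gammaM M"
  shows "\<exists>\<rho> :: real \<Rightarrow> real. \<exists>F :: complex \<Rightarrow> complex.
    (\<forall>\<tau>. \<bar>\<tau> - d\<bar> < \<alpha> * pi / 2 \<longrightarrow>
       \<rho> \<tau> > 0 \<and>
       (\<forall>w\<in>bsector \<tau> \<delta> (\<rho> \<tau>). set_integrable lborel {0<..} (lap_integrand M s f \<tau> w)) \<and>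
       LapM M s f \<tau> holomorphic_on bsector \<tau> \<delta> (\<rho> \<tau>) \<and>
       (\<forall>w\<in>bsector \<tau> \<delta> (\<rho> \<tau>). F w = LapM M s f \<tau> w)) \<and>
    sectorial_region (\<Union>\<tau>\<in>{\<tau>. \<bar>\<tau> - d\<bar> < \<alpha> * pi / 2}. bsector \<tau> \<delta> (\<rho> \<tau>)) d (\<alpha> + \<delta>) \<and>
    F holomorphic_on (\<Union>\<tau>\<in>{\<tau>. \<bar>\<tau> - d\<bar> < \<alpha> * pi / 2}. bsector \<tau> \<delta> (\<rho> \<tau>))"
proof -
  note sr = assms(1) and \<alpha> = assms(2) and f = assms(3) and \<delta> = assms(4) and sg = assms(8)
  have s: "s > 0"
  proof (rule ccontr)
    assume "\<not> s > 0"
    then have "s * gammaM M \<le> 0" using assms(4-6) by (simp add: mult_nonpos_nonneg)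
    then show False using sg by simp
  qed
  have sd: "s * \<delta> < 1" using mult_strict_left_mono[OF assms(5) s] assms(7) by linarith
  obtain \<rho> where \<rho>: "\<And>x. \<rho> x > 0"
    and anti: "\<And>x y. y < \<alpha> * pi / 2 \<Longrightarrow> x \<le> y \<Longrightarrow> \<rho> y \<le> \<rho> x"
    and low: "\<And>b. b < \<alpha> * pi / 2 \<Longrightarrow> \<exists>r>0. \<forall>x\<le>b. r \<le> \<rho> x"
    and common: "\<And>x y. x < \<alpha> * pi / 2 \<Longrightarrow> y < \<alpha> * pi / 2 \<Longrightarrow>
       \<exists>\<theta>. x < \<theta> * pi / 2 \<and> y < \<theta> * pi / 2 \<and> LapM_radius M s f d \<delta> \<theta> (min (\<rho> x) (\<rho> y))"
    by (rule LapM_radius_function[OF sr s sg sd f \<alpha>]) (rule that)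
  define T where "T = {\<tau>. \<bar>\<tau> - d\<bar> < \<alpha> * pi / 2}"
  obtain F where loc: "\<And>\<tau>. \<tau> \<in> T \<Longrightarrow> (\<forall>w\<in>bsector \<tau> \<delta> (\<rho> \<bar>\<tau> - d\<bar>). set_integrable lborel {0<..} (lap_integrand M s f \<tau> w)) \<and>
       LapM M s f \<tau> holomorphic_on bsector \<tau> \<delta> (\<rho> \<bar>\<tau> - d\<bar>)"
    and F: "\<And>\<tau> w. \<tau> \<in> T \<Longrightarrow> w \<in> bsector \<tau> \<delta> (\<rho> \<bar>\<tau> - d\<bar>) \<Longrightarrow> F w = LapM M s f \<tau> w"
    and F_hol: "F holomorphic_on (\<Union>\<tau>\<in>T. bsector \<tau> \<delta> (\<rho> \<bar>\<tau> - d\<bar>))"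
    using LapM_glue[where \<rho> = \<rho> and d = d and \<alpha> = \<alpha>] common unfolding T_def by blast
  have "sectorial_region (\<Union>\<tau>\<in>T. bsector \<tau> \<delta> (\<rho> \<bar>\<tau> - d\<bar>)) d (\<alpha> + \<delta>)"
    unfolding T_def
  proof (rule sectorial_region_Union_bsector[where \<rho> = "\<lambda>\<tau>. \<rho> \<bar>\<tau> - d\<bar>", OF \<alpha> \<delta> \<rho>])
    show "\<rho> \<bar>\<tau>' - d\<bar> \<le> \<rho> \<bar>\<tau> - d\<bar>" if "\<bar>\<tau>' - d\<bar> < \<alpha> * pi / 2" "\<bar>\<tau> - d\<bar> \<le> \<bar>\<tau>' - d\<bar>" for \<tau> \<tau>'
      using that by (rule anti)
    show "\<exists>r>0. \<forall>\<tau>. \<bar>\<tau> - d\<bar> \<le> b * pi / 2 \<longrightarrow> r \<le> \<rho> \<bar>\<tau> - d\<bar>" if "b < \<alpha>" for b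
    proof -
      have "b * pi / 2 < \<alpha> * pi / 2" using that by (simp add: divide_strict_right_mono)
      then obtain r where "r > 0" "\<forall>x\<le>b * pi / 2. r \<le> \<rho> x" using low by blast
      then show ?thesis by blast
    qed
  qed
  show ?thesis
  proof (intro exI[of _ "\<lambda>\<tau>. \<rho> \<bar>\<tau> - d\<bar>"] exI[of _ F] conjI allI impI)
    fix \<tau> assume "\<bar>\<tau> - d\<bar> < \<alpha> * pi / 2"
    then have "\<tau> \<in> T" by (simp add: T_def)
    then show "\<rho> \<bar>\<tau> - d\<bar> > 0" "\<forall>w\<in>bsector \<tau> \<delta> (\<rho> \<bar>\<tau> - d\<bar>). set_integrable lborel {0<..} (lap_integrand M s f \<tau> w)"
      "LapM M s f \<tau> holomorphic_on bsector \<tau> \<delta> (\<rho> \<bar>\<tau> - d\<bar>)"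
      "\<forall>w\<in>bsector \<tau> \<delta> (\<rho> \<bar>\<tau> - d\<bar>). F w = LapM M s f \<tau> w"
      using loc F \<rho> by auto
  qed (use \<open>sectorial_region _ d (\<alpha> + \<delta>)\<close> F_hol in \<open>simp_all add: T_def\<close>)
qed

end
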